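(* Let $H$ be a real Hilbert space, let $m\ge1$, let $\mathcal{A}_i:H\to2^H$ ($i=1,\dots,m$) be maximally monotone, let $\mathcal{B}:H\to H$ be monotone and $L$-Lipschitz ($L>0$), let $\mathcal{C}:H\to H$ be $\beta$-cocoercive ($\beta>0$), and assume that the set of $\mathbf{x}\in H$ with $0\in\sum_{i=1}^m\mathcal{A}_i\mathbf{x}+\mathcal{B}\mathbf{x}+\mathcal{C}\mathbf{x}$ is nonempty. Let $\omega_1,\dots,\omega_m\in(0,1]$ with $\sum_i\omega_i=1$, let $\lambda>0$ and $\gamma\in\left(0,\frac{\lambda\beta}{\beta+\lambda(2\beta L+1)}\right)$. Let $\mathbf{x}_0,\mathbf{x}_{-1}\in H$, $(\mathbf{u}_{i,0})_{1\le i\le m}\in H^m$ and iterate, for $n\ge0$, $$\mathbf{x}_{n+1}=\sum_{j=1}^m\omega_j\big(\mathbf{x}_n-\gamma\mathbf{u}_{j,n}-\gamma(2\mathcal{B}\mathbf{x}_n-\mathcal{B}\mathbf{x}_{n-1})-\gamma\mathcal{C}\mathbf{x}_n\big),$$ and for $i=1,\dots,m$: $$\mathbf{y}_{i,n+1}=J_{\frac{\lambda}{\omega_i}\mathcal{A}_i}(2\mathbf{x}_{n+1}-\mathbf{x}_n+\lambda\mathbf{u}_{i,n}),\qquad \mathbf{u}_{i,n+1}=\mathbf{u}_{i,n}+\tfrac1\lambda(2\mathbf{x}_{n+1}-\mathbf{x}_n-\mathbf{y}_{i,n+1}).$$ Then $\{\mathbf{x}_n\}$ converges weakly to a point $\mathbf{x}$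 satisfying $0\in\sum_{i=1}^m\mathcal{A}_i\mathbf{x}+\mathcal{B}\mathbf{x}+\mathcal{C}\mathbf{x}$.
   Context: $J_{T}=(\mathrm{Id}+T)^{-1}$ is the resolvent of a maximally monotone operator $T$. $\beta$-cocoercive means $\langle x-y,\mathcal{C}x-\mathcal{C}y\rangle\ge\beta\|\mathcal{C}x-\mathcal{C}y\|^2$ for all $x,y$. *)

theory Defs
  imports "HOL-Analysis.Analysis"
begin

text \<open>Real Hilbert space: a type of class real_inner and complete_space.
Set-valued operators are functions 'a => 'a set.\<close>

definition monotone_op :: "('a::real_inner \<Rightarrow> 'a set) \<Rightarrow> bool" where
  "monotone_op A \<longleftrightarrow> (\<forall>x y u v. u \<in> A x \<longrightarrow> v \<in> A y \<longrightarrow> inner (x - y) (u - v) \<ge> 0)"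

definition maximally_monotone :: "('a::real_inner \<Rightarrow> 'a set) \<Rightarrow> bool" where
  "maximally_monotone A \<longleftrightarrow> monotone_op A \<and>
     (\<forall>B. monotone_op B \<and> (\<forall>x. A x \<subseteq> B x) \<longrightarrow> B = A)"

definition monotone_single :: "('a::real_inner \<Rightarrow> 'a) \<Rightarrow> bool" where
  "monotone_single B \<longleftrightarrow> (\<forall>x y. inner (x - y) (B x - B y) \<ge> 0)"

definition lipschitz_op :: "real \<Rightarrow> ('a::real_normed_vector \<Rightarrow> 'a) \<Rightarrow> bool" where
  "lipschitz_op L B \<longleftrightarrow> (\<forall>x y. norm (B x - B y) \<le> L * norm (x - y))"

definition cocoercive :: "real \<Rightarrow> ('a::real_inner \<Rightarrow> 'a) \<Rightarrow> bool" where
  "cocoercive \<beta> C \<longleftrightarrow> (\<forall>x y. inner (x - y) (C x - C y) \<ge> \<beta> * (norm (C x - C y))\<^sup>2)"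

definition scale_op :: "real \<Rightarrow> ('a::real_vector \<Rightarrow> 'a set) \<Rightarrow> ('a \<Rightarrow> 'a set)" where
  "scale_op c A = (\<lambda>x. (\<lambda>v. c *\<^sub>R v) ` A x)"

text \<open>Resolvent J_T = (Id + T)^{-1}: J_T z is the (unique, for maximally monotone T)
  point y with z \<in> y + T y.\<close>
definition resolvent :: "('a::real_vector \<Rightarrow> 'a set) \<Rightarrow> 'a \<Rightarrow> 'a" where
  "resolvent T z = (THE y. z - y \<in> T y)"

definition weakly_converges :: "(nat \<Rightarrow> 'a::real_inner) \<Rightarrow> 'a \<Rightarrow> bool" where
  "weakly_converges s l \<longleftrightarrow> (\<forall>w. (\<lambda>n. inner (s n) w) \<longlonglongrightarrow> inner l w)"

definition is_zero_of :: "nat \<Rightarrow> (nat \<Rightarrow> 'a::real_vector \<Rightarrow> 'a set) \<Rightarrow> ('a \<Rightarrow> 'a) \<Rightarrow> ('a \<Rightarrow> 'a) \<Rightarrow> 'a \<Rightarrow> bool" where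
  "is_zero_of m A B C x \<longleftrightarrow>
     (\<exists>a. (\<forall>i\<in>{1..m}. a i \<in> A i x) \<and> (\<Sum>i=1..m. a i) + B x + C x = 0)"

end

theory Submission
  imports Defs "HOL-Library.Diagonal_Subsequence"
begin

(* For a primal-dual solution (z, w), i.e. omega_i w_i in A_i z and sum_i omega_i w_i + B z + C z = 0,
   the quantity
     V_n = Q(x_n - z, u_n - w) - <B x_n - B x_{n-1}, x_n - z> + L/2 |x_n - x_{n-1}|^2,
     Q(a, b) = |a|^2 / (2 gamma) + lam/2 sum_i omega_i |b_i|^2 - <a, sum_i omega_i b_i>,
   decreases by at least kappa |x_{n+1} - x_n|^2 + kappa' sum_i omega_i |u_{i,n+1} - u_{i,n}|^2 along the
   iteration, and the step size condition is exactly what makes kappa positive.  Hence the iterates are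
   bounded and their increments tend to zero.  Passing to the limit in the monotonicity inequalities of
   the A_i and of B + C shows that every weak cluster point of (x_n, u_n) is a primal-dual solution.
   Since Q is a positive definite quadratic form and Q(x_n - z, u_n - w) converges for every solution,
   an Opial-type argument shows that all weak cluster points of x_n coincide.

   The Hilbert space background (Minty's theorem for the resolvents, Riesz representation and weak
   sequential compactness of bounded sequences) rests on one fact: minimising sequences of a function
   that is uniformly convex along midpoints are Cauchy, by the parallelogram law. *)

lemma power2_norm_add: "(norm (x + y))\<^sup>2 = (norm x)\<^sup>2 + 2 * inner x y + (norm (y::'a::real_inner))\<^sup>2"
  by (simp add: power2_norm_eq_inner inner_add_left inner_add_right inner_commute)

lemma power2_norm_diff: "(norm (x - y))\<^sup>2 = (norm x)\<^sup>2 - 2 * inner x y + (norm (y::'a::real_inner))\<^sup>2"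
  by (simp add: power2_norm_eq_inner inner_diff_left inner_diff_right inner_commute)

lemma inner_le_Young:
  fixes a b :: "'a::real_inner"
  assumes "t > 0"
  shows "inner a b \<le> (norm a)\<^sup>2 / (2 * t) + t / 2 * (norm b)\<^sup>2"
proof -
  have "0 \<le> (norm (a - t *\<^sub>R b))\<^sup>2" by simp
  also have "\<dots> = (norm a)\<^sup>2 - 2 * t * inner a b + t\<^sup>2 * (norm b)\<^sup>2"
    by (simp add: power2_norm_diff power_mult_distrib)
  finally show ?thesis
    using assms by (simp add: field_simps power2_eq_square)
qed

lemma norm_weighted_sum_sq_le:
  fixes v :: "'i \<Rightarrow> 'a::real_inner"
  assumes "finite I" "\<forall>i\<in>I. 0 \<le> w i" "sum w I = 1"
  shows "(norm (\<Sum>i\<in>I. w i *\<^sub>R v i))\<^sup>2 \<le> (\<Sum>i\<in>I. w i * (norm (v i))\<^sup>2)"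
proof -
  define c where "c = (\<Sum>i\<in>I. w i *\<^sub>R v i)"
  have "0 \<le> (\<Sum>i\<in>I. w i * (norm (v i - c))\<^sup>2)"
    using assms by (intro sum_nonneg) auto
  also have "\<dots> = (\<Sum>i\<in>I. w i * (norm (v i))\<^sup>2) - 2 * inner c c + (\<Sum>i\<in>I. w i) * (norm c)\<^sup>2"
    by (simp add: power2_norm_diff algebra_simps sum.distrib sum_subtractf sum_distrib_left
        sum_distrib_right c_def inner_sum_left power2_norm_eq_inner[of c])
  finally show ?thesis
    using assms(3) unfolding c_def by (simp add: power2_norm_eq_inner)
qed

lemma inner_weighted_sums_le_weighted_inner:
  fixes a b :: "'i \<Rightarrow> 'a::real_inner"
  assumes "finite S" "\<forall>p\<in>S. 0 \<le> w p" "sum w S = 1"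
    and mono: "\<forall>p\<in>S. \<forall>q\<in>S. 0 \<le> inner (a p - a q) (b p - b q)"
  shows "inner (\<Sum>p\<in>S. w p *\<^sub>R a p) (\<Sum>p\<in>S. w p *\<^sub>R b p) \<le> (\<Sum>p\<in>S. w p * inner (a p) (b p))"
proof -
  define ab where "ab = (\<Sum>p\<in>S. w p * inner (a p) (b p))"
  define AB where "AB = inner (\<Sum>p\<in>S. w p *\<^sub>R a p) (\<Sum>p\<in>S. w p *\<^sub>R b p)"
  have diag: "(\<Sum>p\<in>S. \<Sum>q\<in>S. w p * w q * inner (a p) (b p)) = ab"
    unfolding ab_def
    by (simp add: sum_distrib_right[symmetric] sum_distrib_left[symmetric] assms(3)
        mult.commute mult.left_commute mult.assoc)
  have diag': "(\<Sum>p\<in>S. \<Sum>q\<in>S. w p * w q * inner (a q) (b q)) = ab"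
    unfolding ab_def
    by (simp add: sum_distrib_left[symmetric] sum_distrib_right[symmetric] assms(3) mult.assoc)
  have cross: "(\<Sum>p\<in>S. \<Sum>q\<in>S. w p * w q * inner (a p) (b q)) = AB"
    "(\<Sum>p\<in>S. \<Sum>q\<in>S. w p * w q * inner (a q) (b p)) = AB"
    unfolding AB_def inner_sum_left inner_sum_right
    by (simp_all add: sum_distrib_left mult.assoc) (subst sum.swap, simp add: mult.left_commute)
  have "0 \<le> (\<Sum>p\<in>S. \<Sum>q\<in>S. w p * w q * inner (a p - a q) (b p - b q))"
    using assms by (intro sum_nonneg) simp
  also have "\<dots> = 2 * ab - 2 * AB"
    using diag diag' cross
    by (simp add: inner_diff_left inner_diff_right algebra_simps sum_subtractf sum.distrib)
  finally show ?thesis unfolding ab_def AB_def by simp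
qed

lemma quadratic_nonneg_imp_linear_coeff_zero:
  fixes a b :: real
  assumes "\<And>t. 0 \<le> a * t + b * t\<^sup>2"
  shows "a = 0"
proof (rule ccontr)
  assume "a \<noteq> 0"
  define D where "D = b\<^sup>2 + 1"
  have "D > 0" unfolding D_def by (simp add: add_nonneg_pos)
  have "b - D < 0"
  proof -
    have "0 \<le> (b - 1/2)\<^sup>2" by simp
    then show ?thesis unfolding D_def by (simp add: power2_eq_square algebra_simps)
  qed
  have "a * (- a / D) + b * (- a / D)\<^sup>2 = a\<^sup>2 * (b - D) / D\<^sup>2"
    using \<open>D > 0\<close> by (simp add: field_simps power2_eq_square)
  also have "\<dots> < 0"
    using \<open>a \<noteq> 0\<close> \<open>D > 0\<close> \<open>b - D < 0\<close> by (intro divide_neg_pos mult_pos_neg) simp_all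
  finally show False using assms[of "- a / D"] by simp
qed

lemma tendsto_zero_if_norm_sq_le:
  fixes f :: "nat \<Rightarrow> 'a::real_normed_vector"
  assumes "\<And>n. c * (norm (f n))\<^sup>2 \<le> g n" and "g \<longlonglongrightarrow> 0" and "c > 0"
  shows "f \<longlonglongrightarrow> 0"
proof -
  have "(\<lambda>n. (norm (f n))\<^sup>2) \<longlonglongrightarrow> 0"
  proof (rule tendsto_sandwich[of "\<lambda>_. 0" _ _ "\<lambda>n. g n / c"])
    show "\<forall>\<^sub>F n in sequentially. (norm (f n))\<^sup>2 \<le> g n / c"
      using assms(1,3) by (intro always_eventually allI) (simp add: pos_le_divide_eq mult.commute)
    show "(\<lambda>n. g n / c) \<longlonglongrightarrow> 0"
      using tendsto_divide_zero[OF assms(2)] .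
  qed simp_all
  then have "(\<lambda>n. sqrt ((norm (f n))\<^sup>2)) \<longlonglongrightarrow> sqrt 0"
    by (intro tendsto_intros)
  then show ?thesis
    by (simp add: tendsto_norm_zero_iff)
qed

lemma bounded_range_if_norm_sq_le:
  fixes f :: "nat \<Rightarrow> 'a::real_normed_vector"
  assumes "\<And>n. c * (norm (f n - a))\<^sup>2 \<le> K" and "c > 0"
  shows "bounded (range f)"
proof -
  have "norm (f n - a) \<le> max 1 (K / c)" for n
  proof (cases "norm (f n - a) \<le> 1")
    case False
    then have "norm (f n - a) \<le> (norm (f n - a))\<^sup>2"
      using mult_left_mono[of 1 "norm (f n - a)" "norm (f n - a)"] by (simp add: power2_eq_square)
    also have "\<dots> \<le> K / c"
      using assms by (simp add: pos_le_divide_eq mult.commute)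
    finally show ?thesis by simp
  qed simp
  then have "dist a (f n) \<le> max 1 (K / c)" for n
    by (simp add: dist_norm norm_minus_commute)
  then show ?thesis
    unfolding bounded_def by blast
qed

lemma Cauchy_if_norm_diff_sq_le:
  fixes X :: "nat \<Rightarrow> 'a::real_normed_vector"
  assumes le: "\<And>m n. (norm (X m - X n))\<^sup>2 \<le> \<delta> m + \<delta> n" and "\<delta> \<longlonglongrightarrow> 0"
  shows "Cauchy X"
proof (rule CauchyI)
  fix e :: real assume "0 < e"
  then have "0 < e\<^sup>2 / 2" by simp
  then have "eventually (\<lambda>n. \<delta> n < e\<^sup>2 / 2) sequentially"
    using \<open>\<delta> \<longlonglongrightarrow> 0\<close> by (rule order_tendstoD(2)[rotated])
  then obtain M where M: "\<And>n. n \<ge> M \<Longrightarrow> \<delta> n < e\<^sup>2 / 2"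
    unfolding eventually_sequentially by blast
  have "norm (X m - X n) < e" if "m \<ge> M" "n \<ge> M" for m n
  proof (rule power2_less_imp_less)
    show "(norm (X m - X n))\<^sup>2 < e\<^sup>2"
      using le[of m n] M[OF that(1)] M[OF that(2)] by linarith
  qed (use \<open>0 < e\<close> in simp)
  then show "\<exists>M. \<forall>m\<ge>M. \<forall>n\<ge>M. norm (X m - X n) < e" by blast
qed

lemma tendsto_inner_null_bounded:
  fixes a b :: "nat \<Rightarrow> 'a::real_inner"
  assumes "a \<longlonglongrightarrow> 0" and "bounded (range b)"
  shows "(\<lambda>n. inner (a n) (b n)) \<longlonglongrightarrow> 0"
  using bounded_bilinear.Zfun_prod_Bfun[OF bounded_bilinear_inner, of a sequentially b] assms
  by (simp add: tendsto_Zfun_iff Bseq_eq_bounded)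

section \<open>Minimising sequences of uniformly convex functions\<close>

lemma convex_minimizing_sequence:
  fixes \<phi> :: "'b::real_vector \<Rightarrow> real" and P :: "'b \<Rightarrow> 'a::real_normed_vector"
  assumes "convex S" "S \<noteq> {}" "bdd_below (\<phi> ` S)" "c > 0"
    and mid: "\<forall>a\<in>S. \<forall>b\<in>S. \<phi> ((1/2) *\<^sub>R (a + b)) + c * (norm (P a - P b))\<^sup>2 \<le> (\<phi> a + \<phi> b) / 2"
  obtains s where "\<And>n. s n \<in> S" "(\<lambda>n. \<phi> (s n)) \<longlonglongrightarrow> Inf (\<phi> ` S)" "Cauchy (\<lambda>n. P (s n))"
proof -
  define \<mu> where "\<mu> = Inf (\<phi> ` S)"
  define \<delta> where "\<delta> n = inverse (real (Suc n))" for n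
  have \<mu>_le: "\<mu> \<le> \<phi> a" if "a \<in> S" for a
    unfolding \<mu>_def using assms(3) that by (rule cINF_lower)
  have "\<exists>a\<in>S. \<phi> a < \<mu> + 2 * (c * \<delta> n)" for n
    using cInf_lessD[of "\<phi> ` S" "\<mu> + 2 * (c * \<delta> n)"] assms(2,4) unfolding \<mu>_def \<delta>_def by auto
  then obtain s where s: "\<And>n. s n \<in> S" "\<And>n. \<phi> (s n) < \<mu> + 2 * (c * \<delta> n)" by metis
  have \<delta>_0: "\<delta> \<longlonglongrightarrow> 0"
    unfolding \<delta>_def by (rule LIMSEQ_inverse_real_of_nat)
  have lim: "(\<lambda>n. \<phi> (s n)) \<longlonglongrightarrow> \<mu>"
  proof (rule tendsto_sandwich[of "\<lambda>_. \<mu>" _ _ "\<lambda>n. \<mu> + 2 * (c * \<delta> n)"])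
    show "\<forall>\<^sub>F n in sequentially. \<mu> \<le> \<phi> (s n)"
      using s(1) \<mu>_le by (intro always_eventually allI) blast
    show "\<forall>\<^sub>F n in sequentially. \<phi> (s n) \<le> \<mu> + 2 * (c * \<delta> n)"
      using s(2) by (intro always_eventually allI less_imp_le)
    show "(\<lambda>n. \<mu> + 2 * (c * \<delta> n)) \<longlonglongrightarrow> \<mu>"
      using tendsto_add[OF tendsto_const tendsto_mult[OF tendsto_const tendsto_mult[OF tendsto_const \<delta>_0]], of \<mu> 2 c] by simp
  qed simp
  have "Cauchy (\<lambda>n. P (s n))"
  proof (rule Cauchy_if_norm_diff_sq_le[OF _ \<delta>_0])
    fix m n
    have "(1/2) *\<^sub>R (s m + s n) \<in> S"
      using convexD[OF assms(1) s(1) s(1), of "1/2" "1/2"] by (simp add: scaleR_right_distrib)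
    then have "\<mu> \<le> \<phi> ((1/2) *\<^sub>R (s m + s n))" by (rule \<mu>_le)
    then have "c * (norm (P (s m) - P (s n)))\<^sup>2 \<le> c * \<delta> m + c * \<delta> n"
      using mid[rule_format, OF s(1)[of m] s(1)[of n]] s(2)[of m] s(2)[of n] by argo
    then show "(norm (P (s m) - P (s n)))\<^sup>2 \<le> \<delta> m + \<delta> n"
      using \<open>c > 0\<close> by (simp add: distrib_left[symmetric])
  qed
  with s(1) lim show ?thesis
    unfolding \<mu>_def by (rule that)
qed

lemma tendsto_additive_bounded_on:
  fixes g :: "'a::real_normed_vector \<Rightarrow> real"
  assumes "subspace V" "\<And>n. y n \<in> V" "p \<in> V" "y \<longlonglongrightarrow> p"
    and add: "\<And>y y'. y \<in> V \<Longrightarrow> y' \<in> V \<Longrightarrow> g (y + y') = g y + g y'"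
    and scale: "\<And>y c. y \<in> V \<Longrightarrow> g (c *\<^sub>R y) = c * g y"
    and bounded: "\<And>y. y \<in> V \<Longrightarrow> \<bar>g y\<bar> \<le> K * norm y"
  shows "(\<lambda>n. g (y n)) \<longlonglongrightarrow> g p"
proof -
  have "g (y n) - g p = g (y n - p)" for n
    using add[OF assms(2) subspace_neg[OF assms(1,3)]] scale[OF assms(3), of "-1"] by simp
  moreover have "(\<lambda>n. \<bar>g (y n - p)\<bar>) \<longlonglongrightarrow> 0"
  proof (rule tendsto_sandwich[of "\<lambda>_. 0" _ _ "\<lambda>n. K * norm (y n - p)"])
    show "\<forall>\<^sub>F n in sequentially. \<bar>g (y n - p)\<bar> \<le> K * norm (y n - p)"
      using bounded subspace_diff[OF assms(1) assms(2) assms(3)] by (intro always_eventually allI) blast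
    show "(\<lambda>n. K * norm (y n - p)) \<longlonglongrightarrow> 0"
      using tendsto_mult_right_zero[OF tendsto_norm_zero[OF LIM_zero[OF assms(4)]]] .
  qed simp_all
  ultimately have "(\<lambda>n. g (y n) - g p) \<longlonglongrightarrow> 0"
    by (simp add: tendsto_rabs_zero_iff)
  then show ?thesis
    by (rule LIM_zero_cancel)
qed

lemma quadratic_minimizer_represents:
  fixes g :: "'a::real_inner \<Rightarrow> real"
  assumes "subspace V" "p \<in> V"
    and add: "\<And>y y'. y \<in> V \<Longrightarrow> y' \<in> V \<Longrightarrow> g (y + y') = g y + g y'"
    and scale: "\<And>y c. y \<in> V \<Longrightarrow> g (c *\<^sub>R y) = c * g y"
    and min: "\<And>y. y \<in> V \<Longrightarrow> inner p p - 2 * g p \<le> inner y y - 2 * g y"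
    and "v \<in> V"
  shows "inner p v = g v"
proof -
  have "0 \<le> 2 * (inner p v - g v) * t + inner v v * t\<^sup>2" for t
  proof -
    have "inner p p - 2 * g p \<le> inner (p + t *\<^sub>R v) (p + t *\<^sub>R v) - 2 * g (p + t *\<^sub>R v)"
      using assms(1,2,6) by (intro min subspace_add subspace_scale)
    moreover have "g (p + t *\<^sub>R v) = g p + t * g v"
      using add scale assms(2,6) subspace_scale[OF assms(1,6)] by simp
    ultimately show ?thesis
      by (simp add: inner_add_left inner_add_right inner_commute algebra_simps power2_eq_square)
  qed
  then have "2 * (inner p v - g v) = 0"
    by (rule quadratic_nonneg_imp_linear_coeff_zero)
  then show ?thesis by simp
qed

lemma riesz_closed_subspace:
  fixes V :: "'a::{real_inner,complete_space} set" and g :: "'a \<Rightarrow> real"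
  assumes "subspace V" "closed V"
    and add: "\<And>y y'. y \<in> V \<Longrightarrow> y' \<in> V \<Longrightarrow> g (y + y') = g y + g y'"
    and scale: "\<And>y c. y \<in> V \<Longrightarrow> g (c *\<^sub>R y) = c * g y"
    and bounded: "\<And>y. y \<in> V \<Longrightarrow> \<bar>g y\<bar> \<le> K * norm y"
  shows "\<exists>p\<in>V. \<forall>v\<in>V. inner p v = g v"
proof -
  define \<phi> where "\<phi> y = inner y y - 2 * g y" for y
  have bdd: "bdd_below (\<phi> ` V)"
  proof (rule bdd_belowI2)
    fix y assume "y \<in> V"
    have "0 \<le> (norm y - K)\<^sup>2" by simp
    then show "- K\<^sup>2 \<le> \<phi> y"
      using bounded[OF \<open>y \<in> V\<close>] unfolding \<phi>_def power2_norm_eq_inner[symmetric]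
      by (simp add: power2_eq_square algebra_simps)
  qed
  have mid: "\<forall>a\<in>V. \<forall>b\<in>V. \<phi> ((1/2) *\<^sub>R (a + b)) + 1/4 * (norm (a - b))\<^sup>2 \<le> (\<phi> a + \<phi> b) / 2"
  proof (intro ballI)
    fix a b assume "a \<in> V" "b \<in> V"
    have "g ((1/2) *\<^sub>R (a + b)) = (g a + g b) / 2"
      using add scale subspace_add[OF assms(1) \<open>a \<in> V\<close> \<open>b \<in> V\<close>] \<open>a \<in> V\<close> \<open>b \<in> V\<close> by simp
    then show "\<phi> ((1/2) *\<^sub>R (a + b)) + 1/4 * (norm (a - b))\<^sup>2 \<le> (\<phi> a + \<phi> b) / 2"
      unfolding \<phi>_def
      by (simp add: power2_norm_eq_inner inner_diff_left inner_diff_right inner_add_left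
          inner_add_right inner_commute algebra_simps)
  qed
  have "V \<noteq> {}" "(0::real) < 1/4"
    using subspace_0[OF assms(1)] by auto
  then obtain s where s: "\<And>n. s n \<in> V" "(\<lambda>n. \<phi> (s n)) \<longlonglongrightarrow> Inf (\<phi> ` V)" "Cauchy s"
    by (rule convex_minimizing_sequence[where P = "\<lambda>y. y", OF subspace_imp_convex[OF assms(1)] _ bdd _ mid])
      (rule that)
  then obtain p where p: "s \<longlonglongrightarrow> p"
    using Cauchy_convergent_iff convergent_def by blast
  have "p \<in> V"
    using assms(2) s(1) p unfolding closed_sequential_limits by blast
  have "(\<lambda>n. \<phi> (s n)) \<longlonglongrightarrow> \<phi> p"
    unfolding \<phi>_def
    by (intro tendsto_intros p tendsto_additive_bounded_on[OF assms(1) s(1) \<open>p \<in> V\<close> p add scale bounded])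
  then have "\<phi> p = Inf (\<phi> ` V)"
    using s(2) LIMSEQ_unique by blast
  then have "\<phi> p \<le> \<phi> y" if "y \<in> V" for y
    using bdd that by (simp add: cINF_lower)
  then show ?thesis
    using \<open>p \<in> V\<close> quadratic_minimizer_represents[OF assms(1) \<open>p \<in> V\<close> add scale] unfolding \<phi>_def by blast
qed

lemma nonpos_if_mult_le_sq:
  fixes a M :: real
  assumes "\<And>t. 0 < t \<Longrightarrow> t \<le> 1 \<Longrightarrow> t * a \<le> t\<^sup>2 * M"
  shows "a \<le> 0"
proof (rule ccontr)
  assume "\<not> a \<le> 0"
  define t where "t = min 1 (a / (\<bar>M\<bar> + 1))"
  have "0 < t" "t \<le> 1"
    using \<open>\<not> a \<le> 0\<close> unfolding t_def by auto
  then have "a \<le> t * M"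
    using assms[of t] by (simp add: power2_eq_square mult.assoc)
  also have "\<dots> \<le> t * \<bar>M\<bar>"
    using \<open>0 < t\<close> by (intro mult_left_mono) auto
  also have "\<dots> \<le> a / (\<bar>M\<bar> + 1) * \<bar>M\<bar>"
    unfolding t_def by (intro mult_right_mono) auto
  also have "\<dots> < a"
    using \<open>\<not> a \<le> 0\<close> by (simp add: field_simps)
  finally show False by simp
qed

definition paraboloid_excess :: "'a::real_inner \<times> real \<Rightarrow> real" where
  "paraboloid_excess k = (norm (fst k))\<^sup>2 / 4 + snd k"

lemma paraboloid_excess_midpoint:
  "paraboloid_excess ((1/2) *\<^sub>R (a + b)) + 1/16 * (norm (fst a - fst b))\<^sup>2
    = (paraboloid_excess a + paraboloid_excess b) / 2"
  unfolding paraboloid_excess_def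
  by (simp add: power2_norm_eq_inner inner_diff_left inner_diff_right inner_add_left
      inner_add_right inner_commute algebra_simps) (simp add: field_simps)

lemma paraboloid_excess_combination:
  "t * ((norm (- (1/2) *\<^sub>R fst k))\<^sup>2 + inner (- (1/2) *\<^sub>R fst k) (fst k') - snd k')
    = paraboloid_excess k - paraboloid_excess ((1 - t) *\<^sub>R k + t *\<^sub>R k')
      + t\<^sup>2 * ((norm (fst k' - fst k))\<^sup>2 / 4) - t * paraboloid_excess k"
  unfolding paraboloid_excess_def
  by (simp add: power2_norm_eq_inner inner_diff_left inner_diff_right inner_add_left
      inner_add_right inner_commute algebra_simps del: norm_scaleR) (simp add: field_simps power2_eq_square)

lemma convex_above_paraboloid_halfspace:
  fixes K :: "('a::{real_inner,complete_space} \<times> real) set"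
  assumes "convex K" and above: "\<And>k. k \<in> K \<Longrightarrow> 0 \<le> paraboloid_excess k"
  shows "\<exists>x. \<forall>k\<in>K. (norm x)\<^sup>2 + inner x (fst k) \<le> snd k"
proof (cases "K = {}")
  case False
  have bdd: "bdd_below (paraboloid_excess ` K)"
    using above by (intro bdd_belowI[of _ 0]) auto
  have mid: "\<forall>a\<in>K. \<forall>b\<in>K. paraboloid_excess ((1/2) *\<^sub>R (a + b)) + 1/16 * (norm (fst a - fst b))\<^sup>2
      \<le> (paraboloid_excess a + paraboloid_excess b) / 2"
    using paraboloid_excess_midpoint by (metis order_refl)
  have "(0::real) < 1/16" by simp
  then obtain s where s: "\<And>n. s n \<in> K"
      "(\<lambda>n. paraboloid_excess (s n)) \<longlonglongrightarrow> Inf (paraboloid_excess ` K)"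
    and Cauchy: "Cauchy (\<lambda>n. fst (s n))"
    by (rule convex_minimizing_sequence[OF assms(1) False bdd _ mid]) (rule that)
  obtain c\<^sub>0 where c\<^sub>0: "(\<lambda>n. fst (s n)) \<longlonglongrightarrow> c\<^sub>0"
    using Cauchy unfolding Cauchy_convergent_iff convergent_def by blast
  define \<mu> where "\<mu> = Inf (paraboloid_excess ` K)"
  have "0 \<le> \<mu>"
    unfolding \<mu>_def using False above by (intro cINF_greatest) auto
  define x where "x = - (1/2) *\<^sub>R c\<^sub>0"
  have "(norm x)\<^sup>2 + inner x (fst k) \<le> snd k" if "k \<in> K" for k
  proof -
    have "(norm x)\<^sup>2 + inner x (fst k) - snd k \<le> 0"
    proof (rule nonpos_if_mult_le_sq)
    fix t :: real assume t: "0 < t" "t \<le> 1"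
    define \<Phi> where "\<Phi> y = (norm y)\<^sup>2 + inner y (fst k) - snd k" for y
    have "t * \<Phi> (- (1/2) *\<^sub>R fst (s n))
        \<le> paraboloid_excess (s n) - \<mu> + t\<^sup>2 * ((norm (fst k - fst (s n)))\<^sup>2 / 4)
          - t * paraboloid_excess (s n)"
      for n
    proof -
      have "(1 - t) *\<^sub>R s n + t *\<^sub>R k \<in> K"
        using convexD[OF assms(1) s(1) that] t by simp
      then have "\<mu> \<le> paraboloid_excess ((1 - t) *\<^sub>R s n + t *\<^sub>R k)"
        unfolding \<mu>_def using bdd by (rule cINF_lower[rotated])
      then show ?thesis
        using paraboloid_excess_combination[of t "s n" k] unfolding \<Phi>_def by linarith
    qed
    moreover have "(\<lambda>n. t * \<Phi> (- (1/2) *\<^sub>R fst (s n))) \<longlonglongrightarrow> t * \<Phi> x"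
      unfolding \<Phi>_def x_def by (intro tendsto_intros c\<^sub>0)
    moreover have "(\<lambda>n. paraboloid_excess (s n) - \<mu> + t\<^sup>2 * ((norm (fst k - fst (s n)))\<^sup>2 / 4)
        - t * paraboloid_excess (s n)) \<longlonglongrightarrow> \<mu> - \<mu> + t\<^sup>2 * ((norm (fst k - c\<^sub>0))\<^sup>2 / 4) - t * \<mu>"
      using s(2) unfolding \<mu>_def[symmetric] by (intro tendsto_intros c\<^sub>0) simp_all
    ultimately have "t * \<Phi> x \<le> t\<^sup>2 * ((norm (fst k - c\<^sub>0))\<^sup>2 / 4) - t * \<mu>"
      by (intro LIMSEQ_le) auto
    moreover have "0 \<le> t * \<mu>"
      using \<open>0 \<le> \<mu>\<close> t by simp
    ultimately show "t * ((norm x)\<^sup>2 + inner x (fst k) - snd k) \<le> t\<^sup>2 * ((norm (fst k - c\<^sub>0))\<^sup>2 / 4)"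
      unfolding \<Phi>_def by linarith
    qed
    then show ?thesis by simp
  qed
  then show ?thesis
    by (intro exI[of _ x] ballI)
qed simp

section \<open>Monotone operators and Minty's theorem\<close>

lemma monotone_opD: "monotone_op A \<Longrightarrow> u \<in> A x \<Longrightarrow> v \<in> A y \<Longrightarrow> 0 \<le> inner (x - y) (u - v)"
  unfolding monotone_op_def by blast

lemma maximally_monotone_imp_monotone_op: "maximally_monotone A \<Longrightarrow> monotone_op A"
  unfolding maximally_monotone_def by blast

(* Debrunner-Flor in variational form: (a, b) |-> (b - z - a, <a, b - z>) maps the graph of a monotone
   operator, together with its convex hull, above the paraboloid d = - |c|^2 / 4, and the half-space
   |x|^2 + <x, c> <= d containing that hull makes (x, z - x) monotonically related to the graph. *)
lemma convex_hull_monotone_graph_above_paraboloid: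
  fixes T :: "'a::real_inner \<Rightarrow> 'a set"
  assumes "monotone_op T"
    and "k \<in> convex hull {(b - z - a, inner a (b - z)) | a b. b \<in> T a}"
  shows "0 \<le> paraboloid_excess k"
proof -
  define G where "G = {(b - z - a, inner a (b - z)) | a b. b \<in> T a}"
  obtain S w where S: "finite S" "S \<subseteq> G" "\<forall>p\<in>S. 0 \<le> w p" "sum w S = 1" "(\<Sum>p\<in>S. w p *\<^sub>R p) = k"
    using assms(2) unfolding convex_hull_explicit G_def[symmetric] by blast
  have "\<forall>p\<in>S. \<exists>a b. b \<in> T a \<and> p = (b - z - a, inner a (b - z))"
    using S(2) unfolding G_def by blast
  then obtain a b where ab: "\<And>p. p \<in> S \<Longrightarrow> b p \<in> T (a p)"
    "\<And>p. p \<in> S \<Longrightarrow> p = (b p - z - a p, inner (a p) (b p - z))"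
    by metis
  define A where "A = (\<Sum>p\<in>S. w p *\<^sub>R a p)"
  define B where "B = (\<Sum>p\<in>S. w p *\<^sub>R (b p - z))"
  have "fst k = (\<Sum>p\<in>S. w p *\<^sub>R (b p - z - a p))"
    unfolding S(5)[symmetric] fst_sum by (intro sum.cong refl) (subst ab(2), auto)
  then have "fst k = B - A"
    by (simp add: A_def B_def scaleR_diff_right sum_subtractf)
  moreover have "snd k = (\<Sum>p\<in>S. w p * inner (a p) (b p - z))"
    unfolding S(5)[symmetric] snd_sum by (intro sum.cong refl) (subst ab(2), auto)
  moreover have "inner A B \<le> (\<Sum>p\<in>S. w p * inner (a p) (b p - z))"
    unfolding A_def B_def using S(1,3,4)
  proof (rule inner_weighted_sums_le_weighted_inner)
    show "\<forall>p\<in>S. \<forall>q\<in>S. 0 \<le> inner (a p - a q) ((b p - z) - (b q - z))"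
      using ab(1) monotone_opD[OF assms(1)] by simp
  qed
  moreover have "inner A B + (norm (B - A))\<^sup>2 / 4 = (norm (A + B))\<^sup>2 / 4"
    by (simp add: power2_norm_eq_inner inner_diff_left inner_diff_right inner_add_left
        inner_add_right inner_commute algebra_simps) (simp add: field_simps)
  ultimately show ?thesis
    unfolding paraboloid_excess_def by (smt (verit) zero_le_divide_iff zero_le_power2)
qed

lemma monotone_op_related_point_exists:
  fixes T :: "'a::{real_inner,complete_space} \<Rightarrow> 'a set"
  assumes "monotone_op T"
  shows "\<exists>x. \<forall>a b. b \<in> T a \<longrightarrow> 0 \<le> inner (x - a) (z - x - b)"
proof -
  define G where "G = {(b - z - a, inner a (b - z)) | a b. b \<in> T a}"
  obtain x where x: "\<forall>k\<in>convex hull G. (norm x)\<^sup>2 + inner x (fst k) \<le> snd k"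
    using convex_above_paraboloid_halfspace[OF convex_convex_hull]
      convex_hull_monotone_graph_above_paraboloid[OF assms, of _ z, folded G_def] by blast
  have "0 \<le> inner (x - a) (z - x - b)" if "b \<in> T a" for a b
  proof -
    have "(b - z - a, inner a (b - z)) \<in> convex hull G"
      using that unfolding G_def by (intro hull_inc) blast
    then have "(norm x)\<^sup>2 + inner x (b - z - a) \<le> inner a (b - z)"
      using x by fastforce
    then show ?thesis
      by (simp add: power2_norm_eq_inner inner_diff_left inner_diff_right inner_commute algebra_simps)
  qed
  then show ?thesis by blast
qed

theorem maximally_monotone_Minty:
  fixes T :: "'a::{real_inner,complete_space} \<Rightarrow> 'a set"
  assumes "maximally_monotone T"
  shows "\<exists>y. z - y \<in> T y"
proof -
  have mono: "monotone_op T"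
    using assms by (rule maximally_monotone_imp_monotone_op)
  then obtain x where x: "\<And>a b. b \<in> T a \<Longrightarrow> 0 \<le> inner (x - a) (z - x - b)"
    using monotone_op_related_point_exists by blast
  define T' where "T' p = (if p = x then insert (z - x) (T p) else T p)" for p
  have "monotone_op T'"
    unfolding monotone_op_def
  proof (intro allI impI)
    fix p q u v assume "u \<in> T' p" "v \<in> T' q"
    moreover have "0 \<le> inner (p - q) (u - v)" if "u \<in> T p" "v \<in> T q"
      using monotone_opD[OF mono that] .
    moreover have "0 \<le> inner (x - q) (z - x - v)" if "v \<in> T q"
      using x[OF that] .
    moreover have "0 \<le> inner (p - x) (u - (z - x))" if "u \<in> T p"
      using x[OF that] by (simp add: inner_diff_left inner_diff_right algebra_simps)
    ultimately show "0 \<le> inner (p - q) (u - v)"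
      unfolding T'_def by (auto split: if_splits)
  qed
  moreover have "T p \<subseteq> T' p" for p
    unfolding T'_def by auto
  ultimately have "T' = T"
    using assms unfolding maximally_monotone_def by blast
  moreover have "z - x \<in> T' x"
    unfolding T'_def by simp
  ultimately show ?thesis by auto
qed

lemma resolvent_eqI:
  assumes "monotone_op T" and "z - y \<in> T y"
  shows "resolvent T z = y"
  unfolding resolvent_def
proof (rule the_equality)
  fix y' assume "z - y' \<in> T y'"
  then have "0 \<le> inner (y' - y) ((z - y') - (z - y))"
    using assms by (blast intro: monotone_opD)
  also have "\<dots> = - (norm (y' - y))\<^sup>2"
    by (simp add: power2_norm_eq_inner inner_diff_left inner_diff_right inner_commute algebra_simps)
  finally show "y' = y" by simp
qed (rule assms(2))

lemma resolvent_mem: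
  fixes T :: "'a::{real_inner,complete_space} \<Rightarrow> 'a set"
  assumes "maximally_monotone T"
  shows "z - resolvent T z \<in> T (resolvent T z)"
  using maximally_monotone_Minty[OF assms, of z]
    resolvent_eqI[OF maximally_monotone_imp_monotone_op[OF assms]] by metis

lemma scale_op_scale_op: "scale_op a (scale_op b A) = scale_op (a * b) A"
  unfolding scale_op_def by (auto simp: image_image fun_eq_iff)

lemma scale_op_1: "scale_op 1 A = A"
  unfolding scale_op_def by simp

lemma monotone_op_scale_op:
  assumes "0 \<le> c" and "monotone_op A"
  shows "monotone_op (scale_op c A)"
  unfolding monotone_op_def scale_op_def
  using assms monotone_opD[OF assms(2)] by (auto simp flip: scaleR_diff_right)

lemma maximally_monotone_scale_op:
  assumes "0 < c" and "maximally_monotone A"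
  shows "maximally_monotone (scale_op c A)"
  unfolding maximally_monotone_def
proof (intro conjI allI impI)
  have mono: "monotone_op A"
    using assms(2) by (rule maximally_monotone_imp_monotone_op)
  then show "monotone_op (scale_op c A)"
    using assms(1) by (intro monotone_op_scale_op) simp_all
  fix B assume B: "monotone_op B \<and> (\<forall>x. scale_op c A x \<subseteq> B x)"
  have "A x \<subseteq> scale_op (1/c) B x" for x
  proof
    fix a assume "a \<in> A x"
    then have "c *\<^sub>R a \<in> B x" using B unfolding scale_op_def by auto
    then have "(1/c) *\<^sub>R (c *\<^sub>R a) \<in> scale_op (1/c) B x" unfolding scale_op_def by (rule imageI)
    then show "a \<in> scale_op (1/c) B x" using assms(1) by simp
  qed
  moreover have "monotone_op (scale_op (1/c) B)"
    using B assms(1) by (intro monotone_op_scale_op) simp_all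
  ultimately have "scale_op (1/c) B = A"
    using assms(2) unfolding maximally_monotone_def by blast
  then have "scale_op c A = scale_op (c * (1/c)) B"
    using scale_op_scale_op[of c "1/c" B] by simp
  then show "B = scale_op c A"
    using assms(1) by (simp add: scale_op_1)
qed

lemma cocoercive_imp_monotone_single:
  assumes "cocoercive \<beta> C" and "0 \<le> \<beta>"
  shows "monotone_single C"
  unfolding monotone_single_def
proof (intro allI)
  fix x y
  have "0 \<le> \<beta> * (norm (C x - C y))\<^sup>2"
    using assms(2) by simp
  also have "\<dots> \<le> inner (x - y) (C x - C y)"
    using assms(1) unfolding cocoercive_def by blast
  finally show "0 \<le> inner (x - y) (C x - C y)" .
qed

lemma cocoercive_imp_lipschitz_op:
  assumes "cocoercive \<beta> C" and "0 < \<beta>"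
  shows "lipschitz_op (1 / \<beta>) C"
  unfolding lipschitz_op_def
proof (intro allI)
  fix x y
  have "\<beta> * norm (C x - C y) * norm (C x - C y) \<le> inner (x - y) (C x - C y)"
    using assms(1) unfolding cocoercive_def by (simp add: power2_eq_square mult.assoc)
  also have "\<dots> \<le> norm (x - y) * norm (C x - C y)"
    by (rule norm_cauchy_schwarz)
  finally have "\<beta> * norm (C x - C y) \<le> norm (x - y)"
    by (cases "C x = C y") (simp_all add: mult_right_le_imp_le)
  then show "norm (C x - C y) \<le> 1 / \<beta> * norm (x - y)"
    using assms(2) by (simp add: field_simps)
qed

lemma monotone_single_add:
  assumes "monotone_single B" and "monotone_single C"
  shows "monotone_single (\<lambda>x. B x + C x)"
  unfolding monotone_single_def
proof (intro allI)
  fix x y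
  have "inner (x - y) (B x + C x - (B y + C y)) = inner (x - y) (B x - B y) + inner (x - y) (C x - C y)"
    by (simp add: inner_diff_right inner_add_right)
  then show "0 \<le> inner (x - y) (B x + C x - (B y + C y))"
    using assms unfolding monotone_single_def by (simp add: add_nonneg_nonneg)
qed

lemma lipschitz_op_add:
  assumes "lipschitz_op K B" and "lipschitz_op K' C"
  shows "lipschitz_op (K + K') (\<lambda>x. B x + C x)"
  unfolding lipschitz_op_def
proof (intro allI)
  fix x y
  have "norm (B x + C x - (B y + C y)) \<le> norm (B x - B y) + norm (C x - C y)"
    by (metis add_diff_add norm_triangle_ineq)
  also have "\<dots> \<le> (K + K') * norm (x - y)"
    using assms unfolding lipschitz_op_def by (simp add: distrib_right add_mono)
  finally show "norm (B x + C x - (B y + C y)) \<le> (K + K') * norm (x - y)" .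
qed

lemma lipschitz_op_imp_continuous_on:
  assumes "lipschitz_op K f" and "0 \<le> K"
  shows "continuous_on S f"
  using assms unfolding lipschitz_op_def
  by (intro lipschitz_on_continuous_on[of K]) (auto intro: lipschitz_onI simp: dist_norm)

lemma lipschitz_op_inner_le:
  assumes "lipschitz_op L B" and "0 \<le> L"
  shows "inner (B a - B c) e \<le> L / 2 * (norm (a - c))\<^sup>2 + L / 2 * (norm e)\<^sup>2"
proof -
  have "inner (B a - B c) e \<le> norm (B a - B c) * norm e"
    by (rule norm_cauchy_schwarz)
  also have "\<dots> \<le> L * norm (a - c) * norm e"
    using assms(1) unfolding lipschitz_op_def by (simp add: mult_right_mono)
  also have "\<dots> \<le> L / 2 * (norm (a - c))\<^sup>2 + L / 2 * (norm e)\<^sup>2"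
  proof -
    have "0 \<le> L / 2 * (norm (a - c) - norm e)\<^sup>2" using assms(2) by simp
    then show ?thesis by (simp add: power2_eq_square algebra_simps)
  qed
  finally show ?thesis .
qed

lemma cocoercive_inner_ge:
  assumes "cocoercive \<beta> C" and "0 < \<beta>"
  shows "- (norm (b - a))\<^sup>2 / (4 * \<beta>) \<le> inner (C a - C z) (b - z)"
proof -
  define c where "c = norm (C a - C z)"
  have "\<beta> * c\<^sup>2 \<le> inner (C a - C z) (a - z)"
    using assms(1) unfolding cocoercive_def c_def by (simp add: inner_commute)
  moreover have "- (c * norm (b - a)) \<le> inner (C a - C z) (b - a)"
    using Cauchy_Schwarz_ineq2[of "C a - C z" "b - a"] unfolding c_def by linarith
  moreover have "- (norm (b - a))\<^sup>2 / (4 * \<beta>) \<le> \<beta> * c\<^sup>2 - c * norm (b - a)"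
  proof -
    have "0 \<le> (2 * \<beta> * c - norm (b - a))\<^sup>2 / (4 * \<beta>)" using assms(2) by simp
    also have "\<dots> = \<beta> * c\<^sup>2 - c * norm (b - a) + (norm (b - a))\<^sup>2 / (4 * \<beta>)"
      using assms(2) by (simp add: field_simps power2_eq_square)
    finally show ?thesis by simp
  qed
  moreover have "inner (C a - C z) (b - z) = inner (C a - C z) (a - z) + inner (C a - C z) (b - a)"
    by (simp add: inner_diff_right)
  ultimately show ?thesis by linarith
qed

lemma monotonically_related_continuous_eq:
  fixes D :: "'a::real_inner \<Rightarrow> 'a"
  assumes "continuous_on UNIV D" and related: "\<And>s. 0 \<le> inner (x - s) (w - D s)"
  shows "D x = w"
proof -
  define v where "v = D x - w"
  define t where "t n = inverse (real (Suc n))" for n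
  have "0 \<le> inner v (w - D (x - t n *\<^sub>R v))" for n
  proof -
    have "0 \<le> t n * inner v (w - D (x - t n *\<^sub>R v))"
      using related[of "x - t n *\<^sub>R v"] by simp
    moreover have "0 < t n" unfolding t_def by simp
    ultimately show ?thesis by (simp add: zero_le_mult_iff)
  qed
  moreover have "(\<lambda>n. inner v (w - D (x - t n *\<^sub>R v))) \<longlonglongrightarrow> inner v (w - D x)"
  proof -
    have "(\<lambda>n. x - t n *\<^sub>R v) \<longlonglongrightarrow> x - 0 *\<^sub>R v"
      unfolding t_def by (intro tendsto_intros LIMSEQ_inverse_real_of_nat)
    then have "(\<lambda>n. x - t n *\<^sub>R v) \<longlonglongrightarrow> x"
      by simp
    moreover have "isCont D x"
      using assms(1) by (simp add: continuous_on_eq_continuous_at)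
    ultimately have "(\<lambda>n. D (x - t n *\<^sub>R v)) \<longlonglongrightarrow> D x"
      by (rule isCont_tendsto_compose[rotated])
    then show ?thesis by (intro tendsto_intros)
  qed
  ultimately have "0 \<le> inner v (w - D x)"
    by (intro LIMSEQ_le_const) auto
  then have "(norm v)\<^sup>2 \<le> 0"
    unfolding v_def by (simp add: power2_norm_eq_inner inner_diff_right inner_commute)
  then show ?thesis unfolding v_def by simp
qed

section \<open>Weak convergence\<close>

lemma weakly_converges_inner: "weakly_converges s l \<Longrightarrow> (\<lambda>n. inner (s n) w) \<longlonglongrightarrow> inner l w"
  unfolding weakly_converges_def by blast

lemma weakly_converges_subseq:
  "weakly_converges s l \<Longrightarrow> strict_mono r \<Longrightarrow> weakly_converges (s \<circ> r) l"
  unfolding weakly_converges_def using LIMSEQ_subseq_LIMSEQ by (fastforce simp: o_def)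

lemma weakly_converges_scaleR:
  "weakly_converges s l \<Longrightarrow> weakly_converges (\<lambda>n. c *\<^sub>R s n) (c *\<^sub>R l)"
  unfolding weakly_converges_def by (auto intro: tendsto_mult_left)

lemma weakly_converges_add_null:
  assumes "weakly_converges s l" and "(\<lambda>n. t n - s n) \<longlonglongrightarrow> 0"
  shows "weakly_converges t l"
  unfolding weakly_converges_def
proof
  fix w
  have "(\<lambda>n. inner (t n - s n) w) \<longlonglongrightarrow> 0"
    using tendsto_inner_null_bounded[OF assms(2), of "\<lambda>_. w"] by simp
  then have "(\<lambda>n. inner (s n) w + inner (t n - s n) w) \<longlonglongrightarrow> inner l w + 0"
    by (intro tendsto_add weakly_converges_inner[OF assms(1)])
  then show "(\<lambda>n. inner (t n) w) \<longlonglongrightarrow> inner l w" by (simp add: inner_diff_left)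
qed

lemma weakly_converges_Suc_subseq:
  assumes "weakly_converges (s \<circ> r) l" and "strict_mono r" and "(\<lambda>n. s (Suc n) - s n) \<longlonglongrightarrow> 0"
  shows "weakly_converges (\<lambda>k. s (Suc (r k))) l"
  using weakly_converges_add_null[OF assms(1)] LIMSEQ_subseq_LIMSEQ[OF assms(3,2)] by (simp add: o_def)

lemma weakly_converges_if_subseq_subseq:
  assumes "\<And>r :: nat \<Rightarrow> nat. strict_mono r \<Longrightarrow>
    \<exists>r' :: nat \<Rightarrow> nat. strict_mono r' \<and> weakly_converges (s \<circ> r \<circ> r') l"
  shows "weakly_converges s l"
  unfolding weakly_converges_def
proof (rule allI, rule ccontr)
  fix w assume "\<not> (\<lambda>n. inner (s n) w) \<longlonglongrightarrow> inner l w"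
  then obtain e :: real where "e > 0"
    and not_ev: "\<not> eventually (\<lambda>n. dist (inner (s n) w) (inner l w) < e) sequentially"
    unfolding tendsto_iff by auto
  obtain r :: "nat \<Rightarrow> nat" where r: "strict_mono r" "\<forall>n. \<not> dist (inner (s (r n)) w) (inner l w) < e"
    using not_eventually_sequentiallyD[OF not_ev] by blast
  obtain r' where "weakly_converges (s \<circ> r \<circ> r') l"
    using assms[OF r(1)] by auto
  then have "(\<lambda>n. inner (s (r (r' n))) w) \<longlonglongrightarrow> inner l w"
    using weakly_converges_inner by (simp add: o_def)
  then have "eventually (\<lambda>n. dist (inner (s (r (r' n))) w) (inner l w) < e) sequentially"
    using \<open>e > 0\<close> by (rule tendstoD)
  then obtain N where "dist (inner (s (r (r' N))) w) (inner l w) < e"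
    unfolding eventually_sequentially by auto
  with r(2) show False by simp
qed

lemma subspace_convergent_inner: "subspace {w. convergent (\<lambda>k. inner (s k) w)}" (is "subspace ?W")
  unfolding subspace_def
proof (intro conjI ballI allI)
  fix v w c assume "v \<in> ?W" "w \<in> ?W"
  then show "v + w \<in> ?W"
    by (simp add: inner_add_right convergent_add)
  show "c *\<^sub>R v \<in> ?W"
    using \<open>v \<in> ?W\<close> by (cases "c = 0") (simp_all add: convergent_const convergent_mult_const_iff)
qed (simp add: convergent_const)

lemma closed_convergent_inner:
  fixes s :: "nat \<Rightarrow> 'a::real_inner"
  assumes "bounded (range s)"
  shows "closed {w. convergent (\<lambda>k. inner (s k) w)}" (is "closed ?W")
  unfolding closed_sequential_limits
proof (intro allI impI, elim conjE)
  obtain M where "M > 0" and M: "\<And>k. norm (s k) \<le> M"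
    using assms unfolding bounded_pos by auto
  fix ws w assume ws: "\<forall>n. ws n \<in> ?W" "ws \<longlonglongrightarrow> w"
  show "w \<in> ?W"
    unfolding mem_Collect_eq Cauchy_convergent_iff[symmetric]
  proof (rule metric_CauchyI)
    fix e :: real assume "e > 0"
    then have "e / (3 * M) > 0"
      using \<open>M > 0\<close> by simp
    then obtain j where j: "norm (ws j - w) < e / (3 * M)"
      using LIMSEQ_D[OF ws(2)] by blast
    have close: "\<bar>inner (s k) w - inner (s k) (ws j)\<bar> < e / 3" for k
    proof -
      have "\<bar>inner (s k) w - inner (s k) (ws j)\<bar> \<le> norm (s k) * norm (ws j - w)"
        using Cauchy_Schwarz_ineq2[of "s k" "ws j - w"] by (simp add: inner_diff_right abs_minus_commute)
      also have "\<dots> \<le> M * norm (ws j - w)"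
        using M by (simp add: mult_right_mono)
      also have "\<dots> < e / 3"
        using j \<open>M > 0\<close> by (simp add: field_simps)
      finally show ?thesis .
    qed
    have "Cauchy (\<lambda>k. inner (s k) (ws j))"
      using ws(1) by (simp add: Cauchy_convergent_iff)
    moreover have "e / 3 > 0"
      using \<open>e > 0\<close> by simp
    ultimately obtain N where N: "\<forall>m\<ge>N. \<forall>n\<ge>N. dist (inner (s m) (ws j)) (inner (s n) (ws j)) < e / 3"
      by (rule metric_CauchyD[THEN exE])
    have "dist (inner (s m) w) (inner (s n) w) < e" if "m \<ge> N" "n \<ge> N" for m n
    proof -
      have "\<bar>inner (s m) (ws j) - inner (s n) (ws j)\<bar> < e / 3"
        using N that by (simp add: dist_real_def)
      then show ?thesis
        using close[of m] close[of n] unfolding dist_real_def by linarith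
    qed
    then show "\<exists>N. \<forall>m\<ge>N. \<forall>n\<ge>N. dist (inner (s m) w) (inner (s n) w) < e" by blast
  qed
qed

lemma limit_inner_representable:
  fixes s :: "nat \<Rightarrow> 'a::{real_inner,complete_space}"
  assumes "bounded (range s)"
  defines "W \<equiv> {w. convergent (\<lambda>k. inner (s k) w)}"
  shows "\<exists>l\<in>W. \<forall>v\<in>W. (\<lambda>k. inner (s k) v) \<longlonglongrightarrow> inner l v"
proof -
  obtain M where M: "\<And>k. norm (s k) \<le> M"
    using assms(1) unfolding bounded_iff by auto
  define f where "f w = lim (\<lambda>k. inner (s k) w)" for w
  have f: "(\<lambda>k. inner (s k) w) \<longlonglongrightarrow> f w" if "w \<in> W" for w
    using that unfolding W_def f_def by (simp add: convergent_LIMSEQ_iff)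
  note W = subspace_convergent_inner[of s, folded W_def] closed_convergent_inner[OF assms(1), folded W_def]
  have "\<exists>l\<in>W. \<forall>v\<in>W. inner l v = f v"
  proof (rule riesz_closed_subspace[OF W, where K = M])
    fix y y' assume "y \<in> W" "y' \<in> W"
    then have "(\<lambda>k. inner (s k) y + inner (s k) y') \<longlonglongrightarrow> f y + f y'"
      by (intro tendsto_add f)
    then show "f (y + y') = f y + f y'"
      using f[OF subspace_add[OF W(1) \<open>y \<in> W\<close> \<open>y' \<in> W\<close>]]
      by (simp add: inner_add_right LIMSEQ_unique)
  next
    fix y c assume "y \<in> W"
    have "(\<lambda>k. inner (s k) (c *\<^sub>R y)) \<longlonglongrightarrow> f (c *\<^sub>R y)"
      using \<open>y \<in> W\<close> by (intro f subspace_scale[OF W(1)])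
    moreover have "(\<lambda>k. inner (s k) (c *\<^sub>R y)) \<longlonglongrightarrow> c * f y"
      using \<open>y \<in> W\<close> by (simp add: tendsto_mult_left f)
    ultimately show "f (c *\<^sub>R y) = c * f y"
      by (rule LIMSEQ_unique)
  next
    fix y assume "y \<in> W"
    have "\<bar>inner (s k) y\<bar> \<le> M * norm y" for k
      using Cauchy_Schwarz_ineq2[of "s k" y] M[of k] by (meson mult_right_mono norm_ge_zero order_trans)
    then show "\<bar>f y\<bar> \<le> M * norm y"
      by (intro LIMSEQ_le_const2[OF tendsto_rabs[OF f[OF \<open>y \<in> W\<close>]]]) auto
  qed
  then show ?thesis
    using f by metis
qed

lemma weakly_convergent_if_inner_convergent:
  fixes s :: "nat \<Rightarrow> 'a::{real_inner,complete_space}"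
  assumes "bounded (range s)" and "\<And>j. convergent (\<lambda>k. inner (s k) (s j))"
  shows "\<exists>l. weakly_converges s l"
proof -
  define W where "W = {w. convergent (\<lambda>k. inner (s k) w)}"
  note W = subspace_convergent_inner[of s, folded W_def] closed_convergent_inner[OF assms(1), folded W_def]
  obtain l where "l \<in> W" and l: "\<And>v. v \<in> W \<Longrightarrow> (\<lambda>k. inner (s k) v) \<longlonglongrightarrow> inner l v"
    using limit_inner_representable[OF assms(1), folded W_def] by blast
  have "(\<lambda>k. inner (s k) w) \<longlonglongrightarrow> inner l w" for w
  proof -
    \<comment> \<open>\<open>p\<close> is the orthogonal projection of \<open>w\<close> onto \<open>W\<close>,
      which contains \<open>l\<close> and every \<open>s k\<close>.\<close>
    have "\<exists>p\<in>W. \<forall>v\<in>W. inner p v = inner w v"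
      by (rule riesz_closed_subspace[OF W, where K = "norm w"])
        (auto simp: inner_add_right Cauchy_Schwarz_ineq2)
    then obtain p where "p \<in> W" and p: "\<forall>v\<in>W. inner p v = inner w v" by blast
    have "s k \<in> W" for k
      using assms(2) unfolding W_def by simp
    then have "inner (s k) w = inner (s k) p" for k
      using p by (metis inner_commute)
    moreover have "inner l p = inner l w"
      using p \<open>l \<in> W\<close> by (metis inner_commute)
    ultimately show ?thesis
      using l[OF \<open>p \<in> W\<close>] by (simp add: inner_commute)
  qed
  then show ?thesis
    unfolding weakly_converges_def by blast
qed

lemma bounded_imp_weakly_convergent_subseq:
  fixes s :: "nat \<Rightarrow> 'a::{real_inner,complete_space}"
  assumes "bounded (range s)"
  shows "\<exists>r l. strict_mono r \<and> weakly_converges (s \<circ> r) l"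
proof -
  obtain M where M: "\<And>k. norm (s k) \<le> M"
    using assms unfolding bounded_iff by auto
  interpret subseqs "\<lambda>j r. convergent (\<lambda>k. inner (s (r k)) (s j))"
  proof
    fix j and f :: "nat \<Rightarrow> nat"
    have "\<bar>inner (s (f k)) (s j)\<bar> \<le> M * norm (s j)" for k
      using Cauchy_Schwarz_ineq2[of "s (f k)" "s j"] M[of "f k"]
      by (meson mult_right_mono norm_ge_zero order_trans)
    then have "bounded (range (\<lambda>k. inner (s (f k)) (s j)))"
      unfolding bounded_iff by auto
    then obtain l r where "strict_mono r" "((\<lambda>k. inner (s (f k)) (s j)) \<circ> r) \<longlonglongrightarrow> l"
      using bounded_imp_convergent_subsequence by blast
    then show "\<exists>r'. strict_mono r' \<and> convergent (\<lambda>k. inner (s ((f \<circ> r') k)) (s j))"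
      by (auto simp: convergent_def o_def)
  qed
  have "convergent (\<lambda>k. inner (s (diagseq k)) (s j))" for j
  proof -
    have "convergent (\<lambda>k. inner (s ((diagseq \<circ> (+) (Suc j)) k)) (s j))"
      by (rule diagseq_holds) (auto intro: convergent_subseq_convergent[unfolded o_def] simp: o_def)
    then show ?thesis
      using convergent_ignore_initial_segment[of "\<lambda>k. inner (s (diagseq k)) (s j)" "Suc j"]
      by (simp add: o_def add.commute)
  qed
  moreover have "bounded (range (s \<circ> diagseq))"
    using assms by (rule bounded_subset) auto
  ultimately obtain l where "weakly_converges (s \<circ> diagseq) l"
    using weakly_convergent_if_inner_convergent[of "s \<circ> diagseq"] by auto
  then show ?thesis
    using subseq_diagseq by blast
qed

lemma bounded_imp_weakly_convergent_subseq_family: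
  fixes F :: "'i \<Rightarrow> nat \<Rightarrow> 'a::{real_inner,complete_space}"
  assumes "finite I" and "\<forall>i\<in>I. bounded (range (F i))"
  shows "\<exists>r l. strict_mono r \<and> (\<forall>i\<in>I. weakly_converges (F i \<circ> r) (l i))"
  using assms
proof (induction I rule: finite_induct)
  case empty
  show ?case
    using strict_mono_id by blast
next
  case (insert j I)
  have "\<forall>i\<in>I. bounded (range (F i))"
    using insert.prems by simp
  with insert.IH obtain r l where r: "strict_mono r" "\<forall>i\<in>I. weakly_converges (F i \<circ> r) (l i)"
    by blast
  have "range (F j \<circ> r) \<subseteq> range (F j)"
    by (metis image_comp image_mono subset_UNIV)
  then have "bounded (range (F j \<circ> r))"
    using insert.prems bounded_subset by blast
  then obtain r' l' where r': "strict_mono r'" "weakly_converges (F j \<circ> r \<circ> r') l'"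
    using bounded_imp_weakly_convergent_subseq by blast
  have "weakly_converges (F i \<circ> (r \<circ> r')) ((l(j := l')) i)" if "i \<in> insert j I" for i
  proof (cases "i = j")
    case False
    then have "i \<in> I" using that by simp
    then show ?thesis
      using False weakly_converges_subseq[OF r(2)[rule_format, OF \<open>i \<in> I\<close>] r'(1)] by (simp add: o_assoc)
  qed (use r'(2) in \<open>simp add: o_assoc\<close>)
  then show ?case
    using strict_mono_o[OF r(1) r'(1)] by (intro exI[of _ "r \<circ> r'"] exI[of _ "l(j := l')"]) blast
qed

section \<open>Weak limits of approximate zeros of a monotone sum\<close>

context
  fixes A :: "'i \<Rightarrow> 'a::{real_inner,complete_space} \<Rightarrow> 'a set" and D :: "'a \<Rightarrow> 'a" and I :: "'i set"
    and x :: "nat \<Rightarrow> 'a" and y v :: "'i \<Rightarrow> nat \<Rightarrow> 'a" and x_lim :: 'a and v_lim :: "'i \<Rightarrow> 'a"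
  assumes finite: "finite I"
    and maximal: "\<forall>i\<in>I. maximally_monotone (A i)" and monotone_D: "monotone_single D"
    and graph: "\<forall>i\<in>I. \<forall>k. v i k \<in> A i (y i k)"
    and y_x: "\<forall>i\<in>I. (\<lambda>k. y i k - x k) \<longlonglongrightarrow> 0"
    and residual: "(\<lambda>k. (\<Sum>i\<in>I. v i k) + D (x k)) \<longlonglongrightarrow> 0"
    and weak_x: "weakly_converges x x_lim" and weak_v: "\<forall>i\<in>I. weakly_converges (v i) (v_lim i)"
    and bounded_x: "bounded (range x)" and bounded_v: "\<forall>i\<in>I. bounded (range (v i))"
begin

lemma weak_limit_monotonically_related:
  assumes pq: "\<forall>i\<in>I. q i \<in> A i (p i)"
  shows "0 \<le> (\<Sum>i\<in>I. inner (x_lim - p i) (v_lim i - q i)) + inner (x_lim - s) (- (\<Sum>i\<in>I. v_lim i) - D s)"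
proof -
  define G where "G a b = (\<Sum>i\<in>I. inner (a - p i) (b i - q i)) + inner (a - s) (- (\<Sum>i\<in>I. b i) - D s)"
    for a b
  define err where "err k = (\<Sum>i\<in>I. inner (y i k - x k) (v i k - q i))
      + inner ((\<Sum>i\<in>I. v i k) + D (x k)) (x k - s)" for k
  \<comment> \<open>The terms of \<open>G\<close> that are quadratic in \<open>(a, b)\<close> cancel,
    so \<open>G\<close> passes to weak limits.\<close>
  have G_affine: "G a b = (\<Sum>i\<in>I. inner (p i) (q i) - inner a (q i) - inner (b i) (p i) + inner (b i) s)
      - inner a (D s) + inner s (D s)" for a b
    unfolding G_def
    by (simp add: inner_diff_left inner_diff_right inner_sum_right sum.distrib sum_subtractf
        inner_commute algebra_simps)
  have nonneg: "0 \<le> G (x k) (\<lambda>i. v i k) + err k" for k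
  proof -
    have "0 \<le> inner (y i k - p i) (v i k - q i)" if "i \<in> I" for i
      using that graph pq maximal by (blast intro: monotone_opD maximally_monotone_imp_monotone_op)
    then have "0 \<le> (\<Sum>i\<in>I. inner (y i k - p i) (v i k - q i)) + inner (x k - s) (D (x k) - D s)"
      using monotone_D unfolding monotone_single_def by (simp add: sum_nonneg add_nonneg_nonneg)
    also have "\<dots> = G (x k) (\<lambda>i. v i k) + err k"
      unfolding G_def err_def
      by (simp add: inner_diff_left inner_diff_right inner_add_left inner_add_right inner_sum_left
          inner_sum_right sum.distrib sum_subtractf inner_commute algebra_simps)
    finally show ?thesis .
  qed
  have "(\<lambda>k. G (x k) (\<lambda>i. v i k) + err k) \<longlonglongrightarrow> G x_lim v_lim + 0"
  proof (rule tendsto_add)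
    have v_inner: "(\<lambda>k. inner (v i k) w) \<longlonglongrightarrow> inner (v_lim i) w" if "i \<in> I" for i w
      using weak_v that weakly_converges_inner by blast
    show "(\<lambda>k. G (x k) (\<lambda>i. v i k)) \<longlonglongrightarrow> G x_lim v_lim"
      unfolding G_affine
      by (intro tendsto_add tendsto_diff tendsto_sum tendsto_const v_inner
          weakly_converges_inner[OF weak_x])
    have "bounded (range (\<lambda>k. v i k - q i))" if "i \<in> I" for i
      using bounded_v that by (intro bounded_minus_comp) auto
    moreover have "bounded (range (\<lambda>k. x k - s))"
      using bounded_x by (intro bounded_minus_comp) auto
    ultimately show "err \<longlonglongrightarrow> 0"
      unfolding err_def using y_x residual
      by (auto intro!: tendsto_null_sum tendsto_add_zero tendsto_inner_null_bounded)
  qed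
  then have "0 \<le> G x_lim v_lim + 0"
    by (rule LIMSEQ_le_const) (use nonneg in blast)
  then show ?thesis unfolding G_def by simp
qed

lemma weak_limit_is_zero:
  assumes "continuous_on UNIV D"
  shows "(\<forall>i\<in>I. v_lim i \<in> A i x_lim) \<and> (\<Sum>i\<in>I. v_lim i) + D x_lim = 0"
proof
  define p where "p i = resolvent (A i) (x_lim + v_lim i)" for i
  define q where "q i = x_lim + v_lim i - p i" for i
  have pq: "\<forall>i\<in>I. q i \<in> A i (p i)"
    unfolding p_def q_def using maximal resolvent_mem by blast
  have "0 \<le> (\<Sum>i\<in>I. inner (x_lim - p i) (v_lim i - q i))"
    using weak_limit_monotonically_related[OF pq, of x_lim] by simp
  also have "\<dots> = - (\<Sum>i\<in>I. (norm (x_lim - p i))\<^sup>2)"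
    unfolding q_def by (simp add: power2_norm_eq_inner inner_diff_right sum_negf[symmetric]
        inner_commute algebra_simps)
  finally have "(\<Sum>i\<in>I. (norm (x_lim - p i))\<^sup>2) = 0"
    by (simp add: order_antisym sum_nonneg)
  then have "p i = x_lim" if "i \<in> I" for i
    using that finite by (simp add: sum_nonneg_eq_0_iff)
  then show A: "\<forall>i\<in>I. v_lim i \<in> A i x_lim"
    using pq unfolding q_def by force
  have "D x_lim = - (\<Sum>i\<in>I. v_lim i)"
  proof (rule monotonically_related_continuous_eq[OF assms])
    fix s
    show "0 \<le> inner (x_lim - s) (- (\<Sum>i\<in>I. v_lim i) - D s)"
      using weak_limit_monotonically_related[of v_lim "\<lambda>_. x_lim" s] A by simp
  qed
  then show "(\<Sum>i\<in>I. v_lim i) + D x_lim = 0" by simp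
qed

end

section \<open>The splitting iteration\<close>

locale splitting_iteration =
  fixes A :: "nat \<Rightarrow> 'a::{real_inner,complete_space} \<Rightarrow> 'a set"
    and B C :: "'a \<Rightarrow> 'a"
    and m :: nat and L \<beta> lam \<gamma> :: real and \<omega> :: "nat \<Rightarrow> real"
    and x :: "nat \<Rightarrow> 'a" and x_m1 :: 'a
    and u y :: "nat \<Rightarrow> nat \<Rightarrow> 'a"
  assumes maximal_A: "\<forall>i\<in>{1..m}. maximally_monotone (A i)"
    and monotone_B: "monotone_single B" and L_pos: "L > 0" and lipschitz_B: "lipschitz_op L B"
    and \<beta>_pos: "\<beta> > 0" and cocoercive_C: "cocoercive \<beta> C"
    and zero_exists: "\<exists>z. is_zero_of m A B C z"
    and \<omega>_pos: "\<forall>i\<in>{1..m}. 0 < \<omega> i" and \<omega>_sum: "(\<Sum>i=1..m. \<omega> i) = 1"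
    and lam_pos: "lam > 0" and \<gamma>_pos: "\<gamma> > 0"
    and \<gamma>_bound: "\<gamma> < lam * \<beta> / (\<beta> + lam * (2 * \<beta> * L + 1))"
    and x_rec: "\<forall>n. x (Suc n) = (\<Sum>j=1..m. \<omega> j *\<^sub>R
            (x n - \<gamma> *\<^sub>R u j n
                 - \<gamma> *\<^sub>R (2 *\<^sub>R B (x n) - B (if n = 0 then x_m1 else x (n - 1)))
                 - \<gamma> *\<^sub>R C (x n)))"
    and y_rec: "\<forall>n. \<forall>i\<in>{1..m}. y i (Suc n) =
            resolvent (scale_op (lam / \<omega> i) (A i)) (2 *\<^sub>R x (Suc n) - x n + lam *\<^sub>R u i n)"
    and u_rec: "\<forall>n. \<forall>i\<in>{1..m}. u i (Suc n) =
            u i n + (1 / lam) *\<^sub>R (2 *\<^sub>R x (Suc n) - x n - y i (Suc n))"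
begin

definition x_prev :: "nat \<Rightarrow> 'a" where
  "x_prev n = (if n = 0 then x_m1 else x (n - 1))"

definition wavg :: "(nat \<Rightarrow> 'a) \<Rightarrow> 'a" where
  "wavg b = (\<Sum>i=1..m. \<omega> i *\<^sub>R b i)"

definition wnorm2 :: "(nat \<Rightarrow> 'a) \<Rightarrow> real" where
  "wnorm2 b = (\<Sum>i=1..m. \<omega> i * (norm (b i))\<^sup>2)"

definition is_solution :: "'a \<Rightarrow> (nat \<Rightarrow> 'a) \<Rightarrow> bool" where
  "is_solution z w \<longleftrightarrow> (\<forall>i\<in>{1..m}. \<omega> i *\<^sub>R w i \<in> A i z) \<and> wavg w + B z + C z = 0"

definition Q :: "'a \<Rightarrow> (nat \<Rightarrow> 'a) \<Rightarrow> real" where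
  "Q a b = (norm a)\<^sup>2 / (2 * \<gamma>) + lam / 2 * wnorm2 b - inner a (wavg b)"

definition Q_bilinear :: "'a \<Rightarrow> (nat \<Rightarrow> 'a) \<Rightarrow> 'a \<Rightarrow> (nat \<Rightarrow> 'a) \<Rightarrow> real" where
  "Q_bilinear a b a' b' = inner a a' / \<gamma> + lam * (\<Sum>i=1..m. \<omega> i * inner (b i) (b' i))
     - inner a (wavg b') - inner a' (wavg b)"

definition lyapunov :: "'a \<Rightarrow> (nat \<Rightarrow> 'a) \<Rightarrow> nat \<Rightarrow> real" where
  "lyapunov z w n = Q (x n - z) (\<lambda>i. u i n - w i)
     - inner (B (x n) - B (x_prev n)) (x n - z) + L / 2 * (norm (x n - x_prev n))\<^sup>2"

definition \<kappa>\<^sub>0 :: real where "\<kappa>\<^sub>0 = 1 / (2 * \<gamma>) - 1 / (2 * lam) - 1 / (4 * \<beta>)"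
definition \<kappa> :: real where "\<kappa> = \<kappa>\<^sub>0 - L - 1 / (4 * \<beta>)"
definition \<kappa>' :: real where "\<kappa>' = lam\<^sup>2 / (2 * (2 * \<beta> + lam))"

lemma x_prev_Suc [simp]: "x_prev (Suc n) = x n"
  unfolding x_prev_def by simp

lemma wavg_diff: "wavg (\<lambda>i. b i - b' i) = wavg b - wavg b'"
  unfolding wavg_def by (simp add: scaleR_diff_right sum_subtractf)

lemma wnorm2_nonneg: "0 \<le> wnorm2 b"
  unfolding wnorm2_def using \<omega>_pos by (intro sum_nonneg) (simp add: less_imp_le)

lemma norm_wavg_sq_le_wnorm2: "(norm (wavg b))\<^sup>2 \<le> wnorm2 b"
  unfolding wavg_def wnorm2_def using \<omega>_pos \<omega>_sum
  by (intro norm_weighted_sum_sq_le) (auto simp: less_imp_le)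

lemma kappa_pos: "\<kappa> > 0"
proof -
  have den: "0 < \<beta> + lam * (2 * \<beta> * L + 1)"
    using \<beta>_pos lam_pos L_pos by (simp add: add_pos_pos)
  have "\<gamma> * (\<beta> + lam * (2 * \<beta> * L + 1)) < lam * \<beta>"
    using \<gamma>_bound den by (simp add: pos_less_divide_eq)
  moreover have "lam * \<beta> - \<gamma> * (\<beta> + lam * (2 * \<beta> * L + 1)) = \<kappa> * (2 * \<gamma> * lam * \<beta>)"
    unfolding \<kappa>_def \<kappa>\<^sub>0_def using \<gamma>_pos lam_pos \<beta>_pos by (simp add: field_simps)
  ultimately have "0 < \<kappa> * (2 * \<gamma> * lam * \<beta>)" by linarith
  moreover have "0 < 2 * \<gamma> * lam * \<beta>"
    using \<gamma>_pos lam_pos \<beta>_pos by simp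
  ultimately show ?thesis
    by (rule zero_less_mult_pos2)
qed

lemma kappa'_pos: "\<kappa>' > 0"
  unfolding \<kappa>'_def using lam_pos \<beta>_pos by simp

lemma kappa_le_kappa0: "\<kappa> \<le> \<kappa>\<^sub>0"
proof -
  have "0 < 1 / (4 * \<beta>)" using \<beta>_pos by simp
  then show ?thesis unfolding \<kappa>_def using L_pos by linarith
qed

lemma Q_lower: "\<kappa>\<^sub>0 * (norm a)\<^sup>2 + \<kappa>' * wnorm2 b \<le> Q a b"
proof -
  define t where "t = 2 * \<beta> * lam / (2 * \<beta> + lam)"
  have "t > 0" unfolding t_def using \<beta>_pos lam_pos by simp
  have "inner a (wavg b) \<le> (norm a)\<^sup>2 / (2 * t) + t / 2 * (norm (wavg b))\<^sup>2"
    using \<open>t > 0\<close> by (rule inner_le_Young)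
  also have "\<dots> \<le> (norm a)\<^sup>2 / (2 * t) + t / 2 * wnorm2 b"
    using \<open>t > 0\<close> norm_wavg_sq_le_wnorm2 by simp
  also have "(norm a)\<^sup>2 / (2 * t) = (1 / (2 * lam) + 1 / (4 * \<beta>)) * (norm a)\<^sup>2"
    unfolding t_def using \<beta>_pos lam_pos by (simp add: field_simps)
  finally have "inner a (wavg b) \<le> (1 / (2 * lam) + 1 / (4 * \<beta>)) * (norm a)\<^sup>2 + t / 2 * wnorm2 b" .
  moreover have "lam / 2 - t / 2 = \<kappa>'"
    unfolding t_def \<kappa>'_def using \<beta>_pos lam_pos by (simp add: field_simps power2_eq_square)
  then have "lam / 2 * wnorm2 b - t / 2 * wnorm2 b = \<kappa>' * wnorm2 b"
    by (metis left_diff_distrib)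
  moreover have "(norm a)\<^sup>2 / (2 * \<gamma>) - (1 / (2 * lam) + 1 / (4 * \<beta>)) * (norm a)\<^sup>2 = \<kappa>\<^sub>0 * (norm a)\<^sup>2"
    unfolding \<kappa>\<^sub>0_def using lam_pos \<beta>_pos \<gamma>_pos by (simp add: field_simps)
  ultimately show ?thesis
    unfolding Q_def by linarith
qed

lemma inner_wavg_left: "inner a (wavg b) = (\<Sum>i=1..m. \<omega> i * inner (b i) a)"
  unfolding wavg_def by (simp add: inner_sum_right inner_commute)

lemma Q_diff:
  "Q (a - a') (\<lambda>i. b i - b' i) = Q a b - Q_bilinear a b a' b' + Q a' b'"
  unfolding Q_def Q_bilinear_def wnorm2_def wavg_diff
  by (simp add: power2_norm_diff inner_diff_left inner_diff_right sum.distrib sum_subtractf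
      sum_distrib_left algebra_simps add_divide_distrib diff_divide_distrib)

lemma Q_bilinear_self: "Q_bilinear a b a b = 2 * Q a b"
  unfolding Q_def Q_bilinear_def wnorm2_def
  by (simp add: power2_norm_eq_inner algebra_simps sum_distrib_left)

lemma Q_bilinear_commute: "Q_bilinear a b a' b' = Q_bilinear a' b' a b"
  unfolding Q_bilinear_def by (simp add: inner_commute)

lemma Q_bilinear_diff_left:
  "Q_bilinear (a\<^sub>1 - a\<^sub>2) (\<lambda>i. b\<^sub>1 i - b\<^sub>2 i) a' b'
    = Q_bilinear a\<^sub>1 b\<^sub>1 a' b' - Q_bilinear a\<^sub>2 b\<^sub>2 a' b'"
  unfolding Q_bilinear_def wavg_diff
  by (simp add: inner_diff_left inner_diff_right sum_subtractf algebra_simps diff_divide_distrib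
      sum_distrib_left[symmetric] sum.distrib[symmetric])

lemma x_step: "x (Suc n) = x n - \<gamma> *\<^sub>R (wavg (\<lambda>i. u i n) + (2 *\<^sub>R B (x n) - B (x_prev n)) + C (x n))"
proof -
  define b where "b = \<gamma> *\<^sub>R (2 *\<^sub>R B (x n) - B (x_prev n))"
  have "x (Suc n) = (\<Sum>j=1..m. \<omega> j *\<^sub>R (x n - \<gamma> *\<^sub>R u j n - b - \<gamma> *\<^sub>R C (x n)))"
    using x_rec unfolding b_def x_prev_def by simp
  also have "\<dots> = (\<Sum>j=1..m. \<omega> j *\<^sub>R x n) - \<gamma> *\<^sub>R (\<Sum>j=1..m. \<omega> j *\<^sub>R u j n)
      - (\<Sum>j=1..m. \<omega> j *\<^sub>R b) - (\<Sum>j=1..m. \<omega> j *\<^sub>R \<gamma> *\<^sub>R C (x n))"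
    by (simp add: scaleR_diff_right sum_subtractf scaleR_sum_right mult.commute)
  also have "\<dots> = x n - \<gamma> *\<^sub>R wavg (\<lambda>i. u i n) - b - \<gamma> *\<^sub>R C (x n)"
    unfolding wavg_def using \<omega>_sum
    by (simp add: scaleR_sum_left[symmetric] sum_distrib_right[symmetric])
  finally show ?thesis
    unfolding b_def by (simp add: scaleR_right_distrib algebra_simps)
qed

lemma resolvent_step:
  assumes "i \<in> {1..m}"
  shows "\<omega> i *\<^sub>R u i (Suc n) \<in> A i (y i (Suc n))"
    and "y i (Suc n) = 2 *\<^sub>R x (Suc n) - x n + lam *\<^sub>R (u i n - u i (Suc n))"
proof -
  define c where "c = lam / \<omega> i"
  define z where "z = 2 *\<^sub>R x (Suc n) - x n + lam *\<^sub>R u i n"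
  have "\<omega> i > 0" using \<omega>_pos assms by blast
  then have "c > 0" unfolding c_def using lam_pos by simp
  have lam_u: "lam *\<^sub>R u i (Suc n) = z - y i (Suc n)"
  proof -
    have "u i (Suc n) = u i n + (1 / lam) *\<^sub>R (2 *\<^sub>R x (Suc n) - x n - y i (Suc n))"
      using u_rec assms by blast
    then have "lam *\<^sub>R u i (Suc n) = lam *\<^sub>R u i n + (2 *\<^sub>R x (Suc n) - x n - y i (Suc n))"
      using lam_pos by (simp add: scaleR_right_distrib)
    then show ?thesis
      unfolding z_def by (simp add: algebra_simps)
  qed
  then show "y i (Suc n) = 2 *\<^sub>R x (Suc n) - x n + lam *\<^sub>R (u i n - u i (Suc n))"
    unfolding z_def by (simp add: scaleR_diff_right algebra_simps)
  have "maximally_monotone (scale_op c (A i))"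
    using maximally_monotone_scale_op[OF \<open>c > 0\<close>] maximal_A assms by blast
  moreover have "y i (Suc n) = resolvent (scale_op c (A i)) z"
    using y_rec assms unfolding c_def z_def by blast
  ultimately have "z - y i (Suc n) \<in> scale_op c (A i) (y i (Suc n))"
    using resolvent_mem by metis
  then obtain a where a: "a \<in> A i (y i (Suc n))" "lam *\<^sub>R u i (Suc n) = c *\<^sub>R a"
    unfolding scale_op_def lam_u by blast
  have "c *\<^sub>R a = c *\<^sub>R (\<omega> i *\<^sub>R u i (Suc n))"
    using a(2) \<open>\<omega> i > 0\<close> unfolding c_def by simp
  then have "a = \<omega> i *\<^sub>R u i (Suc n)"
    using \<open>c > 0\<close> by (subst (asm) scaleR_cancel_left) simp
  with a(1) show "\<omega> i *\<^sub>R u i (Suc n) \<in> A i (y i (Suc n))" by simp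
qed

lemma solution_exists: "\<exists>z w. is_solution z w"
proof -
  obtain z a where za: "\<forall>i\<in>{1..m}. a i \<in> A i z" "(\<Sum>i=1..m. a i) + B z + C z = 0"
    using zero_exists unfolding is_zero_of_def by blast
  define w where "w i = (1 / \<omega> i) *\<^sub>R a i" for i
  have a: "\<omega> i *\<^sub>R w i = a i" if "i \<in> {1..m}" for i
  proof -
    have "\<omega> i > 0" using \<omega>_pos that by blast
    then show ?thesis unfolding w_def by simp
  qed
  then have "wavg w = (\<Sum>i=1..m. a i)"
    unfolding wavg_def by (intro sum.cong) simp_all
  then have "is_solution z w"
    unfolding is_solution_def using za a by simp
  then show ?thesis by blast
qed

lemma is_solution_imp_zero: "is_solution z w \<Longrightarrow> is_zero_of m A B C z"
  unfolding is_solution_def is_zero_of_def wavg_def by (intro exI[of _ "\<lambda>i. \<omega> i *\<^sub>R w i"]) simp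

lemma resolvent_step_inequality:
  assumes "is_solution z w"
  shows "0 \<le> inner (2 *\<^sub>R x (Suc n) - x n - z) (wavg (\<lambda>i. u i (Suc n) - w i))
    + lam / 2 * wnorm2 (\<lambda>i. u i n - w i) - lam / 2 * wnorm2 (\<lambda>i. u i (Suc n) - w i)
    - lam / 2 * wnorm2 (\<lambda>i. u i (Suc n) - u i n)"
proof -
  define v where "v = 2 *\<^sub>R x (Suc n) - x n - z"
  have summand: "\<omega> i * inner (y i (Suc n) - z) (u i (Suc n) - w i)
      = inner v (\<omega> i *\<^sub>R (u i (Suc n) - w i)) + lam / 2 * (\<omega> i * (norm (u i n - w i))\<^sup>2)
        - lam / 2 * (\<omega> i * (norm (u i (Suc n) - w i))\<^sup>2) - lam / 2 * (\<omega> i * (norm (u i (Suc n) - u i n))\<^sup>2)"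
    if "i \<in> {1..m}" for i
  proof -
    define a where "a = u i n - w i"
    define b where "b = u i (Suc n) - w i"
    have y_z: "y i (Suc n) - z = v + lam *\<^sub>R (a - b)" and u_u: "u i (Suc n) - u i n = b - a"
      unfolding resolvent_step(2)[OF that] v_def a_def b_def by (simp_all add: algebra_simps)
    have "\<omega> i * inner (y i (Suc n) - z) b = \<omega> i * inner v b + lam * \<omega> i * inner (a - b) b"
      unfolding y_z by (simp add: inner_add_left algebra_simps)
    also have "inner (a - b) b = ((norm a)\<^sup>2 - (norm b)\<^sup>2 - (norm (b - a))\<^sup>2) / 2"
      by (simp add: power2_norm_diff power2_norm_eq_inner inner_diff_left inner_diff_right inner_commute)
    finally show ?thesis
      unfolding a_def[symmetric] b_def[symmetric] u_u by (simp add: field_simps)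
  qed
  have "0 \<le> \<omega> i * inner (y i (Suc n) - z) (u i (Suc n) - w i)" if "i \<in> {1..m}" for i
  proof -
    have "monotone_op (A i)"
      using maximal_A that by (blast intro: maximally_monotone_imp_monotone_op)
    moreover have "\<omega> i *\<^sub>R w i \<in> A i z"
      using assms that unfolding is_solution_def by blast
    ultimately have "0 \<le> inner (y i (Suc n) - z) (\<omega> i *\<^sub>R u i (Suc n) - \<omega> i *\<^sub>R w i)"
      using resolvent_step(1)[OF that] by (blast intro: monotone_opD)
    then show ?thesis by (simp add: scaleR_diff_right[symmetric])
  qed
  then have "0 \<le> (\<Sum>i=1..m. \<omega> i * inner (y i (Suc n) - z) (u i (Suc n) - w i))"
    by (intro sum_nonneg) simp
  also have "\<dots> = inner v (wavg (\<lambda>i. u i (Suc n) - w i))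
    + lam / 2 * wnorm2 (\<lambda>i. u i n - w i) - lam / 2 * wnorm2 (\<lambda>i. u i (Suc n) - w i)
    - lam / 2 * wnorm2 (\<lambda>i. u i (Suc n) - u i n)"
    unfolding wavg_def wnorm2_def inner_sum_right sum_distrib_left
    by (simp add: summand sum.distrib sum_subtractf)
  finally show ?thesis unfolding v_def .
qed

lemma forward_step_identity:
  assumes "is_solution z w"
  shows "(norm (x n - z))\<^sup>2 / (2 * \<gamma>) - (norm (x (Suc n) - z))\<^sup>2 / (2 * \<gamma>)
      - (norm (x (Suc n) - x n))\<^sup>2 / (2 * \<gamma>)
    = inner (wavg (\<lambda>i. u i n) - wavg w) (x (Suc n) - z) + inner (B (x n) - B z) (x (Suc n) - z)
      + inner (B (x n) - B (x_prev n)) (x (Suc n) - z) + inner (C (x n) - C z) (x (Suc n) - z)"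
proof -
  define r where "r = (wavg (\<lambda>i. u i n) - wavg w) + (B (x n) - B z) + (B (x n) - B (x_prev n))
    + (C (x n) - C z)"
  have "r = wavg (\<lambda>i. u i n) + (2 *\<^sub>R B (x n) - B (x_prev n)) + C (x n) - (wavg w + B z + C z)"
    unfolding r_def by (simp add: algebra_simps scaleR_2)
  then have "x n - x (Suc n) = \<gamma> *\<^sub>R r"
    using assms x_step[of n] unfolding is_solution_def by simp
  moreover have "(norm (x n - z))\<^sup>2 = (norm (x (Suc n) - x n))\<^sup>2
      + 2 * inner (x n - x (Suc n)) (x (Suc n) - z) + (norm (x (Suc n) - z))\<^sup>2"
    using power2_norm_add[of "x n - x (Suc n)" "x (Suc n) - z"] by (simp add: norm_minus_commute)
  ultimately have "(norm (x n - z))\<^sup>2 - (norm (x (Suc n) - z))\<^sup>2 - (norm (x (Suc n) - x n))\<^sup>2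
      = (2 * \<gamma>) * inner r (x (Suc n) - z)"
    by simp
  then have "(norm (x n - z))\<^sup>2 / (2 * \<gamma>) - (norm (x (Suc n) - z))\<^sup>2 / (2 * \<gamma>)
      - (norm (x (Suc n) - x n))\<^sup>2 / (2 * \<gamma>) = inner r (x (Suc n) - z)"
    using \<gamma>_pos by (simp add: field_simps)
  then show ?thesis
    unfolding r_def by (simp add: inner_add_left)
qed

lemma lyapunov_step:
  assumes "is_solution z w"
  shows "lyapunov z w (Suc n) + Q (x (Suc n) - x n) (\<lambda>i. u i (Suc n) - u i n)
    - (L + 1 / (4 * \<beta>)) * (norm (x (Suc n) - x n))\<^sup>2 \<le> lyapunov z w n"
proof -
  define d where "d = x (Suc n) - x n"
  define v\<^sub>0 v\<^sub>1 v where "v\<^sub>0 = wavg (\<lambda>i. u i n)" and "v\<^sub>1 = wavg (\<lambda>i. u i (Suc n))" and "v = wavg w"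
  define U\<^sub>0 U\<^sub>1 \<Delta> where "U\<^sub>0 = wnorm2 (\<lambda>i. u i n - w i)" and "U\<^sub>1 = wnorm2 (\<lambda>i. u i (Suc n) - w i)"
    and "\<Delta> = wnorm2 (\<lambda>i. u i (Suc n) - u i n)"
  have B_monotone: "- inner (B (x (Suc n)) - B (x n)) (x (Suc n) - z) \<le> inner (B (x n) - B z) (x (Suc n) - z)"
  proof -
    have "0 \<le> inner (x (Suc n) - z) (B (x (Suc n)) - B z)"
      using monotone_B unfolding monotone_single_def by blast
    then show ?thesis by (simp add: inner_diff_left inner_diff_right inner_commute)
  qed
  have B_lipschitz: "inner (B (x n) - B (x_prev n)) (x n - z) - L / 2 * (norm (x n - x_prev n))\<^sup>2
      - L / 2 * (norm d)\<^sup>2 \<le> inner (B (x n) - B (x_prev n)) (x (Suc n) - z)"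
    using lipschitz_op_inner_le[OF lipschitz_B, of "x n" "x_prev n" "- d"] L_pos
    unfolding d_def by (simp add: inner_diff_right norm_minus_commute[of "x n" "x (Suc n)"])
  have C_cocoercive: "- (norm d)\<^sup>2 / (4 * \<beta>) \<le> inner (C (x n) - C z) (x (Suc n) - z)"
    unfolding d_def by (rule cocoercive_inner_ge[OF cocoercive_C \<beta>_pos])
  have A_step: "0 \<le> inner (x (Suc n) - z + d) (v\<^sub>1 - v) + lam / 2 * U\<^sub>0 - lam / 2 * U\<^sub>1 - lam / 2 * \<Delta>"
  proof -
    have "2 *\<^sub>R x (Suc n) - x n - z = x (Suc n) - z + d"
      unfolding d_def by (simp add: scaleR_2 algebra_simps)
    then show ?thesis
      using resolvent_step_inequality[OF assms, of n]
      unfolding wavg_diff v\<^sub>1_def[symmetric] v_def[symmetric] U\<^sub>0_def[symmetric] U\<^sub>1_def[symmetric]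
        \<Delta>_def[symmetric]
      by (simp add: diff_add_eq)
  qed
  have cross: "inner (v\<^sub>0 - v) (x (Suc n) - z) - inner (x (Suc n) - z + d) (v\<^sub>1 - v)
      = inner (x n - z) (v\<^sub>0 - v) - inner (x (Suc n) - z) (v\<^sub>1 - v) - inner d (v\<^sub>1 - v\<^sub>0)"
    unfolding d_def
    by (simp add: inner_diff_left inner_diff_right inner_add_left inner_add_right inner_commute)
  have Q_d: "Q d (\<lambda>i. u i (Suc n) - u i n) = (norm d)\<^sup>2 / (2 * \<gamma>) + lam / 2 * \<Delta> - inner d (v\<^sub>1 - v\<^sub>0)"
    unfolding Q_def \<Delta>_def v\<^sub>0_def v\<^sub>1_def wavg_diff ..
  have V\<^sub>0: "lyapunov z w n = (norm (x n - z))\<^sup>2 / (2 * \<gamma>) + lam / 2 * U\<^sub>0 - inner (x n - z) (v\<^sub>0 - v)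
      - inner (B (x n) - B (x_prev n)) (x n - z) + L / 2 * (norm (x n - x_prev n))\<^sup>2"
    unfolding lyapunov_def Q_def U\<^sub>0_def v\<^sub>0_def v_def wavg_diff ..
  have V\<^sub>1: "lyapunov z w (Suc n) = (norm (x (Suc n) - z))\<^sup>2 / (2 * \<gamma>) + lam / 2 * U\<^sub>1
      - inner (x (Suc n) - z) (v\<^sub>1 - v) - inner (B (x (Suc n)) - B (x n)) (x (Suc n) - z) + L / 2 * (norm d)\<^sup>2"
    unfolding lyapunov_def Q_def d_def U\<^sub>1_def v\<^sub>1_def v_def wavg_diff x_prev_Suc ..
  have "(L + 1 / (4 * \<beta>)) * (norm d)\<^sup>2 = L / 2 * (norm d)\<^sup>2 + L / 2 * (norm d)\<^sup>2 + (norm d)\<^sup>2 / (4 * \<beta>)"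
    by (simp add: algebra_simps)
  then show ?thesis
    using forward_step_identity[OF assms, of n] B_monotone B_lipschitz C_cocoercive A_step cross
    unfolding V\<^sub>0 V\<^sub>1 d_def[symmetric] v\<^sub>0_def[symmetric] v_def[symmetric] Q_d by linarith
qed

lemma lyapunov_decrease:
  assumes "is_solution z w"
  shows "\<kappa> * (norm (x (Suc n) - x n))\<^sup>2 + \<kappa>' * wnorm2 (\<lambda>i. u i (Suc n) - u i n)
    \<le> lyapunov z w n - lyapunov z w (Suc n)"
  using lyapunov_step[OF assms, of n] Q_lower[of "x (Suc n) - x n" "\<lambda>i. u i (Suc n) - u i n"]
  unfolding \<kappa>_def by (simp add: algebra_simps)

lemma lyapunov_lower:
  assumes "is_solution z w"
  shows "\<kappa> * (norm (x n - z))\<^sup>2 + \<kappa>' * wnorm2 (\<lambda>i. u i n - w i) \<le> lyapunov z w n"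
proof -
  have "\<kappa> * (norm (x n - z))\<^sup>2 \<le> (\<kappa>\<^sub>0 - L / 2) * (norm (x n - z))\<^sup>2"
  proof (rule mult_right_mono)
    have "0 < 1 / (4 * \<beta>)" using \<beta>_pos by simp
    then show "\<kappa> \<le> \<kappa>\<^sub>0 - L / 2" unfolding \<kappa>_def using L_pos by linarith
  qed simp
  then show ?thesis
    using Q_lower[of "x n - z" "\<lambda>i. u i n - w i"] L_pos
      lipschitz_op_inner_le[OF lipschitz_B, of "x n" "x_prev n" "x n - z"]
    unfolding lyapunov_def by (simp add: algebra_simps)
qed

lemma lyapunov_nonneg: "is_solution z w \<Longrightarrow> 0 \<le> lyapunov z w n"
  using lyapunov_lower[of z w n] kappa_pos kappa'_pos wnorm2_nonneg[of "\<lambda>i. u i n - w i"]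
  by (smt (verit) mult_nonneg_nonneg zero_le_power2)

lemma lyapunov_decseq: "is_solution z w \<Longrightarrow> decseq (lyapunov z w)"
  using lyapunov_decrease kappa_pos kappa'_pos wnorm2_nonneg
  by (intro decseq_SucI) (smt (verit) mult_nonneg_nonneg zero_le_power2)

lemma lyapunov_differences_tendsto_zero:
  assumes "is_solution z w"
  shows "(\<lambda>n. lyapunov z w n - lyapunov z w (Suc n)) \<longlonglongrightarrow> 0"
proof -
  obtain l where "lyapunov z w \<longlonglongrightarrow> l"
    using decseq_convergent[OF lyapunov_decseq[OF assms]] lyapunov_nonneg[OF assms] by blast
  then have "(\<lambda>n. lyapunov z w n - lyapunov z w (Suc n)) \<longlonglongrightarrow> l - l"
    by (intro tendsto_diff LIMSEQ_Suc)
  then show ?thesis by simp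
qed

lemma x_differences_tendsto_zero: "(\<lambda>n. x (Suc n) - x n) \<longlonglongrightarrow> 0"
proof -
  obtain z w where sol: "is_solution z w"
    using solution_exists by blast
  show ?thesis
  proof (rule tendsto_zero_if_norm_sq_le[OF _ lyapunov_differences_tendsto_zero[OF sol] kappa_pos])
    fix n
    show "\<kappa> * (norm (x (Suc n) - x n))\<^sup>2 \<le> lyapunov z w n - lyapunov z w (Suc n)"
      using lyapunov_decrease[OF sol, of n] kappa'_pos wnorm2_nonneg[of "\<lambda>i. u i (Suc n) - u i n"]
      by (smt (verit) mult_nonneg_nonneg)
  qed
qed

lemma wnorm2_component_le:
  assumes "i \<in> {1..m}"
  shows "\<omega> i * (norm (b i))\<^sup>2 \<le> wnorm2 b"
  unfolding wnorm2_def using assms \<omega>_pos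
  by (intro member_le_sum) (auto simp: less_imp_le)

lemma u_differences_tendsto_zero:
  assumes "i \<in> {1..m}"
  shows "(\<lambda>n. u i (Suc n) - u i n) \<longlonglongrightarrow> 0"
proof -
  obtain z w where sol: "is_solution z w"
    using solution_exists by blast
  have "0 < \<kappa>' * \<omega> i"
    using kappa'_pos \<omega>_pos assms by simp
  show ?thesis
  proof (rule tendsto_zero_if_norm_sq_le[OF _ lyapunov_differences_tendsto_zero[OF sol] \<open>0 < \<kappa>' * \<omega> i\<close>])
    fix n
    have "\<kappa>' * (\<omega> i * (norm (u i (Suc n) - u i n))\<^sup>2) \<le> \<kappa>' * wnorm2 (\<lambda>i. u i (Suc n) - u i n)"
      using wnorm2_component_le[OF assms] kappa'_pos by (intro mult_left_mono) auto
    then show "\<kappa>' * \<omega> i * (norm (u i (Suc n) - u i n))\<^sup>2 \<le> lyapunov z w n - lyapunov z w (Suc n)"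
      using lyapunov_decrease[OF sol, of n] kappa_pos by (smt (verit) mult.assoc mult_nonneg_nonneg zero_le_power2)
  qed
qed

lemma bounded_range_x: "bounded (range x)"
proof -
  obtain z w where sol: "is_solution z w"
    using solution_exists by blast
  show ?thesis
  proof (rule bounded_range_if_norm_sq_le[OF _ kappa_pos])
    fix n
    have "lyapunov z w n \<le> lyapunov z w 0"
      using lyapunov_decseq[OF sol] by (simp add: decseq_def)
    then show "\<kappa> * (norm (x n - z))\<^sup>2 \<le> lyapunov z w 0"
      using lyapunov_lower[OF sol, of n] kappa'_pos wnorm2_nonneg[of "\<lambda>i. u i n - w i"]
      by (smt (verit) mult_nonneg_nonneg)
  qed
qed

lemma bounded_range_u:
  assumes "i \<in> {1..m}"
  shows "bounded (range (u i))"
proof -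
  obtain z w where sol: "is_solution z w"
    using solution_exists by blast
  have "0 < \<kappa>' * \<omega> i"
    using kappa'_pos \<omega>_pos assms by simp
  then show ?thesis
  proof (rule bounded_range_if_norm_sq_le[rotated])
    fix n
    have "lyapunov z w n \<le> lyapunov z w 0"
      using lyapunov_decseq[OF sol] by (simp add: decseq_def)
    moreover have "\<kappa>' * (\<omega> i * (norm (u i n - w i))\<^sup>2) \<le> \<kappa>' * wnorm2 (\<lambda>i. u i n - w i)"
      using wnorm2_component_le[OF assms] kappa'_pos by (intro mult_left_mono) auto
    ultimately show "\<kappa>' * \<omega> i * (norm (u i n - w i))\<^sup>2 \<le> lyapunov z w 0"
      using lyapunov_lower[OF sol, of n] kappa_pos by (smt (verit) mult.assoc mult_nonneg_nonneg zero_le_power2)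
  qed
qed

lemma x_minus_x_prev_tendsto_zero: "(\<lambda>n. x n - x_prev n) \<longlonglongrightarrow> 0"
  by (rule LIMSEQ_imp_Suc) (simp add: x_differences_tendsto_zero)

lemma B_differences_tendsto_zero: "(\<lambda>n. B (x n) - B (x_prev n)) \<longlonglongrightarrow> 0"
proof -
  have "(\<lambda>n. L * norm (x n - x_prev n)) \<longlonglongrightarrow> 0"
    by (intro tendsto_mult_right_zero tendsto_norm_zero x_minus_x_prev_tendsto_zero)
  moreover have "norm (B (x n) - B (x_prev n)) \<le> L * norm (x n - x_prev n)" for n
    using lipschitz_B unfolding lipschitz_op_def by blast
  ultimately have "(\<lambda>n. norm (B (x n) - B (x_prev n))) \<longlonglongrightarrow> 0"
    by (intro tendsto_sandwich[OF _ _ tendsto_const \<open>(\<lambda>n. L * norm (x n - x_prev n)) \<longlonglongrightarrow> 0\<close>])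
      (simp_all add: always_eventually)
  then show ?thesis
    by (rule tendsto_norm_zero_cancel)
qed

lemma residual_tendsto_zero: "(\<lambda>n. wavg (\<lambda>i. u i n) + (B (x n) + C (x n))) \<longlonglongrightarrow> 0"
proof -
  have "wavg (\<lambda>i. u i n) + (B (x n) + C (x n))
      = - ((1 / \<gamma>) *\<^sub>R (x (Suc n) - x n)) - (B (x n) - B (x_prev n))" for n
  proof -
    have "(1 / \<gamma>) *\<^sub>R (x (Suc n) - x n) = - (wavg (\<lambda>i. u i n) + (2 *\<^sub>R B (x n) - B (x_prev n)) + C (x n))"
      using \<gamma>_pos by (simp add: x_step[of n])
    then show ?thesis by (simp add: algebra_simps scaleR_2)
  qed
  moreover have "(\<lambda>n. - ((1 / \<gamma>) *\<^sub>R (x (Suc n) - x n)) - (B (x n) - B (x_prev n))) \<longlonglongrightarrow> - ((1 / \<gamma>) *\<^sub>R 0) - 0"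
    by (intro tendsto_intros x_differences_tendsto_zero B_differences_tendsto_zero)
  ultimately show ?thesis by simp
qed

lemma Q_convergent:
  assumes "is_solution z w"
  shows "convergent (\<lambda>n. Q (x n - z) (\<lambda>i. u i n - w i))"
proof -
  obtain l where l: "lyapunov z w \<longlonglongrightarrow> l"
    using decseq_convergent[OF lyapunov_decseq[OF assms]] lyapunov_nonneg[OF assms] by blast
  have "bounded (range (\<lambda>n. x n - z))"
    using bounded_range_x by (intro bounded_minus_comp) auto
  then have "(\<lambda>n. inner (B (x n) - B (x_prev n)) (x n - z)) \<longlonglongrightarrow> 0"
    by (rule tendsto_inner_null_bounded[OF B_differences_tendsto_zero])
  moreover have "(\<lambda>n. L / 2 * (norm (x n - x_prev n))\<^sup>2) \<longlonglongrightarrow> L / 2 * 0\<^sup>2"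
    using x_minus_x_prev_tendsto_zero by (intro tendsto_intros) (simp add: tendsto_norm_zero_iff)
  ultimately have "(\<lambda>n. lyapunov z w n + inner (B (x n) - B (x_prev n)) (x n - z)
      - L / 2 * (norm (x n - x_prev n))\<^sup>2) \<longlonglongrightarrow> l + 0 - L / 2 * 0\<^sup>2"
    by (rule tendsto_diff[OF tendsto_add[OF l]])
  then show ?thesis
    unfolding lyapunov_def convergent_def by auto
qed

lemma y_minus_x_tendsto_zero:
  assumes "i \<in> {1..m}"
  shows "(\<lambda>n. y i (Suc n) - x (Suc n)) \<longlonglongrightarrow> 0"
proof -
  have "y i (Suc n) - x (Suc n) = (x (Suc n) - x n) - lam *\<^sub>R (u i (Suc n) - u i n)" for n
    unfolding resolvent_step(2)[OF assms] by (simp add: algebra_simps scaleR_2)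
  moreover have "(\<lambda>n. (x (Suc n) - x n) - lam *\<^sub>R (u i (Suc n) - u i n)) \<longlonglongrightarrow> 0 - lam *\<^sub>R 0"
    by (intro tendsto_intros x_differences_tendsto_zero u_differences_tendsto_zero assms)
  ultimately show ?thesis by simp
qed

lemma monotone_single_B_plus_C: "monotone_single (\<lambda>z. B z + C z)"
  using monotone_B cocoercive_imp_monotone_single[OF cocoercive_C] \<beta>_pos
  by (intro monotone_single_add) simp_all

lemma continuous_on_B_plus_C: "continuous_on UNIV (\<lambda>z. B z + C z)"
proof -
  have "0 \<le> L + 1 / \<beta>"
    using L_pos \<beta>_pos by (intro add_nonneg_nonneg) simp_all
  with lipschitz_op_add[OF lipschitz_B cocoercive_imp_lipschitz_op[OF cocoercive_C \<beta>_pos]]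
  show ?thesis
    by (rule lipschitz_op_imp_continuous_on)
qed

lemma weak_cluster_is_solution:
  assumes r: "strict_mono r" and x_r: "weakly_converges (x \<circ> r) z"
    and u_r: "\<forall>i\<in>{1..m}. weakly_converges (u i \<circ> r) (w i)"
  shows "is_solution z w"
proof -
  \<comment> \<open>\<open>resolvent_step\<close> only covers successor indices, hence the shift by one.\<close>
  define N where "N k = Suc (r k)" for k
  have "strict_mono N"
    using r unfolding N_def strict_mono_def by simp
  have "(\<forall>i\<in>{1..m}. \<omega> i *\<^sub>R w i \<in> A i z) \<and> (\<Sum>i\<in>{1..m}. \<omega> i *\<^sub>R w i) + (B z + C z) = 0"
  proof (rule weak_limit_is_zero[where I = "{1..m}" and D = "\<lambda>z. B z + C z" and x = "x \<circ> N"
        and y = "\<lambda>i k. y i (N k)" and v = "\<lambda>i k. \<omega> i *\<^sub>R u i (N k)" and x_lim = z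
        and v_lim = "\<lambda>i. \<omega> i *\<^sub>R w i"])
    show "\<forall>i\<in>{1..m}. \<forall>k. \<omega> i *\<^sub>R u i (N k) \<in> A i (y i (N k))"
      unfolding N_def using resolvent_step(1) by blast
    show "\<forall>i\<in>{1..m}. (\<lambda>k. y i (N k) - (x \<circ> N) k) \<longlonglongrightarrow> 0"
      using LIMSEQ_subseq_LIMSEQ[OF y_minus_x_tendsto_zero r] unfolding N_def o_def by blast
    show "(\<lambda>k. (\<Sum>i\<in>{1..m}. \<omega> i *\<^sub>R u i (N k)) + (B ((x \<circ> N) k) + C ((x \<circ> N) k))) \<longlonglongrightarrow> 0"
      using LIMSEQ_subseq_LIMSEQ[OF residual_tendsto_zero \<open>strict_mono N\<close>]
      unfolding wavg_def o_def .
    show "weakly_converges (x \<circ> N) z"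
      using weakly_converges_Suc_subseq[OF x_r r x_differences_tendsto_zero] unfolding N_def o_def .
    show "\<forall>i\<in>{1..m}. weakly_converges (\<lambda>k. \<omega> i *\<^sub>R u i (N k)) (\<omega> i *\<^sub>R w i)"
      using weakly_converges_scaleR weakly_converges_Suc_subseq[OF _ r u_differences_tendsto_zero] u_r
      unfolding N_def by blast
    show "bounded (range (x \<circ> N))"
      using bounded_range_x by (rule bounded_subset) auto
    show "\<forall>i\<in>{1..m}. bounded (range (\<lambda>k. \<omega> i *\<^sub>R u i (N k)))"
    proof
      fix i assume "i \<in> {1..m}"
      have "bounded ((\<lambda>v. \<omega> i *\<^sub>R v) ` range (u i))"
        using bounded_range_u[OF \<open>i \<in> {1..m}\<close>] by (rule bounded_scaling)
      then show "bounded (range (\<lambda>k. \<omega> i *\<^sub>R u i (N k)))"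
        by (rule bounded_subset) auto
    qed
  qed (use maximal_A monotone_single_B_plus_C continuous_on_B_plus_C in simp_all)
  then show ?thesis
    unfolding is_solution_def wavg_def by (simp add: add.assoc)
qed

lemma tendsto_Q_bilinear:
  assumes "weakly_converges (x \<circ> r) a" and "\<forall>i\<in>{1..m}. weakly_converges (u i \<circ> r) (b i)"
  shows "(\<lambda>k. Q_bilinear (x (r k)) (\<lambda>i. u i (r k)) a' b') \<longlonglongrightarrow> Q_bilinear a b a' b'"
proof -
  have u_r: "(\<lambda>k. inner (u i (r k)) c) \<longlonglongrightarrow> inner (b i) c" if "i \<in> {1..m}" for i c
    using weakly_converges_inner assms(2) that by (fastforce simp: o_def)
  have x_r: "(\<lambda>k. inner (x (r k)) c) \<longlonglongrightarrow> inner a c" for c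
    using weakly_converges_inner[OF assms(1)] by (simp add: o_def)
  show ?thesis
    unfolding Q_bilinear_def inner_wavg_left[of a']
    using \<gamma>_pos by (intro tendsto_diff tendsto_add tendsto_divide tendsto_mult tendsto_sum tendsto_const
        x_r u_r) auto
qed

lemma weak_cluster_unique:
  assumes r\<^sub>1: "strict_mono r\<^sub>1" "weakly_converges (x \<circ> r\<^sub>1) z\<^sub>1"
      "\<forall>i\<in>{1..m}. weakly_converges (u i \<circ> r\<^sub>1) (w\<^sub>1 i)"
    and r\<^sub>2: "strict_mono r\<^sub>2" "weakly_converges (x \<circ> r\<^sub>2) z\<^sub>2"
      "\<forall>i\<in>{1..m}. weakly_converges (u i \<circ> r\<^sub>2) (w\<^sub>2 i)"
  shows "z\<^sub>1 = z\<^sub>2"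
proof -
  \<comment> \<open>Opial: \<open>S\<close> is affine in \<open>(x n, u n)\<close> and convergent,
    so it takes the same value at both cluster points.\<close>
  define dz dw where "dz = z\<^sub>1 - z\<^sub>2" and "dw i = w\<^sub>1 i - w\<^sub>2 i" for i
  define S where "S n = Q_bilinear (x n) (\<lambda>i. u i n) dz dw" for n
  have S_eq: "S n = Q (x n - z\<^sub>2) (\<lambda>i. u i n - w\<^sub>2 i) - Q (x n - z\<^sub>1) (\<lambda>i. u i n - w\<^sub>1 i)
      + (Q z\<^sub>1 w\<^sub>1 - Q z\<^sub>2 w\<^sub>2)" for n
    unfolding S_def dz_def dw_def Q_diff Q_bilinear_commute[of "x n"]
    by (simp add: Q_bilinear_diff_left)
  obtain l\<^sub>1 where "(\<lambda>n. Q (x n - z\<^sub>1) (\<lambda>i. u i n - w\<^sub>1 i)) \<longlonglongrightarrow> l\<^sub>1"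
    using Q_convergent[OF weak_cluster_is_solution[OF r\<^sub>1]] unfolding convergent_def by blast
  moreover obtain l\<^sub>2 where "(\<lambda>n. Q (x n - z\<^sub>2) (\<lambda>i. u i n - w\<^sub>2 i)) \<longlonglongrightarrow> l\<^sub>2"
    using Q_convergent[OF weak_cluster_is_solution[OF r\<^sub>2]] unfolding convergent_def by blast
  ultimately have "S \<longlonglongrightarrow> l\<^sub>2 - l\<^sub>1 + (Q z\<^sub>1 w\<^sub>1 - Q z\<^sub>2 w\<^sub>2)"
    unfolding S_eq by (intro tendsto_intros)
  then have "(\<lambda>k. S (r\<^sub>1 k)) \<longlonglongrightarrow> l\<^sub>2 - l\<^sub>1 + (Q z\<^sub>1 w\<^sub>1 - Q z\<^sub>2 w\<^sub>2)"
    and "(\<lambda>k. S (r\<^sub>2 k)) \<longlonglongrightarrow> l\<^sub>2 - l\<^sub>1 + (Q z\<^sub>1 w\<^sub>1 - Q z\<^sub>2 w\<^sub>2)"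
    using LIMSEQ_subseq_LIMSEQ r\<^sub>1(1) r\<^sub>2(1) unfolding o_def by blast+
  moreover have "(\<lambda>k. S (r\<^sub>1 k)) \<longlonglongrightarrow> Q_bilinear z\<^sub>1 w\<^sub>1 dz dw"
    and "(\<lambda>k. S (r\<^sub>2 k)) \<longlonglongrightarrow> Q_bilinear z\<^sub>2 w\<^sub>2 dz dw"
    unfolding S_def using tendsto_Q_bilinear r\<^sub>1(2,3) r\<^sub>2(2,3) by blast+
  ultimately have "Q_bilinear z\<^sub>1 w\<^sub>1 dz dw = Q_bilinear z\<^sub>2 w\<^sub>2 dz dw"
    using LIMSEQ_unique by metis
  then have "Q dz dw = 0"
    using Q_bilinear_diff_left[of z\<^sub>1 z\<^sub>2 w\<^sub>1 w\<^sub>2 dz dw] Q_bilinear_self[of dz dw]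
    unfolding dz_def dw_def by simp
  then have "\<kappa>\<^sub>0 * (norm dz)\<^sup>2 \<le> 0"
    using Q_lower[of dz dw] kappa'_pos wnorm2_nonneg[of dw] by (smt (verit) mult_nonneg_nonneg)
  moreover have "\<kappa>\<^sub>0 > 0"
    using kappa_pos kappa_le_kappa0 by linarith
  ultimately show ?thesis
    unfolding dz_def by (simp add: mult_le_0_iff)
qed

lemma iterates_weakly_convergent_subseq:
  fixes r :: "nat \<Rightarrow> nat"
  assumes "strict_mono r"
  shows "\<exists>r' z w. strict_mono r' \<and> weakly_converges (x \<circ> (r \<circ> r')) z
    \<and> (\<forall>i\<in>{1..m}. weakly_converges (u i \<circ> (r \<circ> r')) (w i))"
proof -
  define F where "F i = (if i = 0 then x else u i) \<circ> r" for i
  have "bounded (range (F i))" if "i \<in> {0..m}" for i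
  proof -
    have "bounded (range (if i = 0 then x else u i))"
      using bounded_range_x bounded_range_u that by simp
    then show ?thesis
      unfolding F_def by (rule bounded_subset) auto
  qed
  then obtain r' l where "strict_mono r'" and l: "\<forall>i\<in>{0..m}. weakly_converges (F i \<circ> r') (l i)"
    using bounded_imp_weakly_convergent_subseq_family[of "{0..m}" F] by auto
  moreover have "weakly_converges (x \<circ> (r \<circ> r')) (l 0)"
    using l[rule_format, of 0] unfolding F_def by (simp add: o_assoc)
  moreover have "weakly_converges (u i \<circ> (r \<circ> r')) (l i)" if "i \<in> {1..m}" for i
    using l[rule_format, of i] that unfolding F_def by (simp add: o_assoc)
  ultimately show ?thesis by blast
qed

theorem iterates_weakly_converge: "\<exists>z. weakly_converges x z \<and> is_zero_of m A B C z"
proof -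
  obtain r z w where r: "strict_mono r" "weakly_converges (x \<circ> r) z"
    "\<forall>i\<in>{1..m}. weakly_converges (u i \<circ> r) (w i)"
    using iterates_weakly_convergent_subseq[OF strict_mono_id] by auto
  have "weakly_converges x z"
  proof (rule weakly_converges_if_subseq_subseq)
    fix r' :: "nat \<Rightarrow> nat" assume "strict_mono r'"
    then obtain r'' z' w' where r'': "strict_mono r''" "weakly_converges (x \<circ> (r' \<circ> r'')) z'"
      "\<forall>i\<in>{1..m}. weakly_converges (u i \<circ> (r' \<circ> r'')) (w' i)"
      using iterates_weakly_convergent_subseq by blast
    moreover have "strict_mono (r' \<circ> r'')"
      using \<open>strict_mono r'\<close> r''(1) by (rule strict_mono_o)
    ultimately have "z' = z"
      using weak_cluster_unique[OF _ _ _ r] by blast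
    then show "\<exists>r''. strict_mono r'' \<and> weakly_converges (x \<circ> r' \<circ> r'') z"
      using r'' by (auto simp: o_assoc)
  qed
  then show ?thesis
    using is_solution_imp_zero[OF weak_cluster_is_solution[OF r]] by blast
qed

end

theorem theorem4p3:
  fixes A :: "nat \<Rightarrow> 'a::{real_inner,complete_space} \<Rightarrow> 'a set"
    and B C :: "'a \<Rightarrow> 'a"
    and m :: nat and L \<beta> lam \<gamma> :: real and \<omega> :: "nat \<Rightarrow> real"
    and x :: "nat \<Rightarrow> 'a" and x_m1 :: 'a
    and u y :: "nat \<Rightarrow> nat \<Rightarrow> 'a"
  assumes "m \<ge> 1"
    and "\<forall>i\<in>{1..m}. maximally_monotone (A i)"
    and "monotone_single B" and "L > 0" and "lipschitz_op L B"
    and "\<beta> > 0" and "cocoercive \<beta> C"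
    and "\<exists>z. is_zero_of m A B C z"
    and "\<forall>i\<in>{1..m}. 0 < \<omega> i \<and> \<omega> i \<le> 1" and "(\<Sum>i=1..m. \<omega> i) = 1"
    and "lam > 0" and "\<gamma> > 0" and "\<gamma> < lam * \<beta> / (\<beta> + lam * (2 * \<beta> * L + 1))"
    and "\<forall>n. x (Suc n) = (\<Sum>j=1..m. \<omega> j *\<^sub>R
            (x n - \<gamma> *\<^sub>R u j n
                 - \<gamma> *\<^sub>R (2 *\<^sub>R B (x n) - B (if n = 0 then x_m1 else x (n - 1)))
                 - \<gamma> *\<^sub>R C (x n)))"
    and "\<forall>n. \<forall>i\<in>{1..m}. y i (Suc n) =
            resolvent (scale_op (lam / \<omega> i) (A i)) (2 *\<^sub>R x (Suc n) - x n + lam *\<^sub>R u i n)"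
    and "\<forall>n. \<forall>i\<in>{1..m}. u i (Suc n) =
            u i n + (1 / lam) *\<^sub>R (2 *\<^sub>R x (Suc n) - x n - y i (Suc n))"
  shows "\<exists>z. weakly_converges x z \<and> is_zero_of m A B C z"
proof -
  interpret splitting_iteration A B C m L \<beta> lam \<gamma> \<omega> x x_m1 u y
    using assms by unfold_locales auto
  show ?thesis
    by (rule iterates_weakly_converge)
qed

end
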